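(* Let $T>0$, let $U\subseteq\mathbb{R}^k$ be bounded with $0\in U$, let $V\subset\mathbb{R}^n$ be bounded, let $f:[0,T]\times\mathbb{R}^n\times U\to\mathbb{R}^n$ be continuous and continuously differentiable in its second and third arguments, and let $x_0\in\mathbb{R}^n$. Let $\|\cdot\|$ be a norm on $\mathbb{R}^n$ with dual norm $\|\cdot\|_\star$, and $\|\cdot\|_U$ a norm on $\mathbb{R}^k$. Consider the system $\dot x(t)=f(t,x(t),u(t))$, $x(0)=x_0$, and its adjoint $\dot\lambda(t)=-D_xf(t,x(t),u(t))^\top\lambda(t)-v(t)$, with measurable inputs $u:[0,T]\to U$, $v:[0,T]\to V$. Let $X,\Lambda\subset\mathbb{R}^n$ be bounded sets containing all state values $x(t)$ and all costate values $\lambda(t)$, $t\in[0,T]$, of the trajectories considered. Assume: (A1) there is $c>0$ such that for all $t\in[0,T]$ and $\tilde u\in U$, the map $x\mapsto f(t,x,\tilde u)$ has one-sided Lipschitz constant at most $-c$ with respect to $\|\cdot\|$, and the solution with $u\equiv0$ is bounded; (A2) for all $t$ and $\tilde x\in\mathbb{R}^n$, $u\mapsto f(t,\tilde x,u)$ is Lipschitz from $(U,\|\cdot\|_U)$ to $(\mathbb{R}^n,\|\cdot\|)$ with constant $\ell_{f,u}$; (A3) for all $t\in[0,T]$, $\tilde x\in X$, $\tilde u\in U$, $\tilde\lambda\in\Lambda$, the map $x\mapsto D_xf(t,x,\tilde u)^\top\tilde\lambda$ is Lipschitz from $(\mathbb{R}^n,\|\cdot\|)$ to $(\mathbb{R}^n,\|\cdot\|_\star)$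 with constant $\ell_{f_x,x}$, and $u\mapsto D_xf(t,\tilde x,u)^\top\tilde\lambda$ is Lipschitz from $(U,\|\cdot\|_U)$ to $(\mathbb{R}^n,\|\cdot\|_\star)$ with constant $\ell_{f_x,u}$. Let $u,\bar u:[0,T]\to U$ and $v,\bar v:[0,T]\to V$ be measurable, let $x,\bar x$ be the state trajectories (both from $x_0$) driven by $u,\bar u$, and let $\lambda,\bar\lambda$ be the adjoint trajectories driven by $(x,u,v)$ and $(\bar x,\bar u,\bar v)$ respectively. With $\kappa=c^{-1}(1-e^{-cT})$, \begin{align*} \sup_{t\in[0,T]}\|\lambda(t)-\bar\lambda(t)\|_\star &\le \|\lambda(T)-\bar\lambda(T)\|_\star + \kappa\sup_{t\in[0,T]}\|v(t)-\bar v(t)\|_\star \\ &\quad + (\ell_{f_x,u}\kappa+\ell_{f_x,x}\ell_{f,u}\kappa^2)\sup_{t\in[0,T]}\|u(t)-\bar u(t)\|_U . \end{align*}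
   Context: The dual norm is $\|z\|_\star=\sup_{\|y\|\le1}y^\top z$. For a matrix $A$, the induced norm is $\|A\|=\sup_{\|x\|=1}\|Ax\|$ and the logarithmic norm is $\mu(A)=\lim_{h\to0^+}(\|I_n+hA\|-1)/h$. For continuously differentiable $F:\mathbb{R}^n\to\mathbb{R}^n$, its one-sided Lipschitz constant with respect to $\|\cdot\|$ is $\sup_{x}\mu(DF(x))$. Solutions are assumed to exist on $[0,T]$. *)

theory Defs
  imports "HOL-Analysis.Analysis"
begin

definition is_norm :: "('a::real_vector \<Rightarrow> real) \<Rightarrow> bool" where
  "is_norm N \<longleftrightarrow> (\<forall>x. 0 \<le> N x) \<and> (\<forall>x. N x = 0 \<longleftrightarrow> x = 0)
     \<and> (\<forall>a x. N (a *\<^sub>R x) = \<bar>a\<bar> * N x) \<and> (\<forall>x y. N (x + y) \<le> N x + N y)"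

definition dual_norm :: "(real^'n \<Rightarrow> real) \<Rightarrow> real^'n \<Rightarrow> real" where
  "dual_norm N z = Sup {y \<bullet> z | y. N y \<le> 1}"

definition induced_norm :: "(real^'n \<Rightarrow> real) \<Rightarrow> real^'n^'n \<Rightarrow> real" where
  "induced_norm N A = Sup {N (A *v x) | x. N x = 1}"

definition log_norm :: "(real^'n \<Rightarrow> real) \<Rightarrow> real^'n^'n \<Rightarrow> real" where
  "log_norm N A = Lim (at_right 0) (\<lambda>h. (induced_norm N (mat 1 + h *\<^sub>R A) - 1) / h)"

text \<open>One-sided Lipschitz constant of a C^1 map with Jacobian DF (extended-real supremum).\<close>
definition osl_const :: "(real^'n \<Rightarrow> real) \<Rightarrow> (real^'n \<Rightarrow> real^'n^'n) \<Rightarrow> ereal" where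
  "osl_const N DF = (SUP x. ereal (log_norm N (DF x)))"

text \<open>Caratheodory (integral) solution of x' = f(t,x,u), x(0)=x0 on [0,T].\<close>
definition state_sol :: "real \<Rightarrow> (real \<Rightarrow> real^'n \<Rightarrow> real^'k \<Rightarrow> real^'n) \<Rightarrow> real^'n
    \<Rightarrow> (real \<Rightarrow> real^'k) \<Rightarrow> (real \<Rightarrow> real^'n) \<Rightarrow> bool" where
  "state_sol T f x0 u x \<longleftrightarrow>
     (\<forall>t\<in>{0..T}. ((\<lambda>s. f s (x s) (u s)) has_integral (x t - x0)) {0..t})"

definition adjoint_sol :: "real \<Rightarrow> (real \<Rightarrow> real^'n \<Rightarrow> real^'k \<Rightarrow> real^'n^'n)
    \<Rightarrow> (real \<Rightarrow> real^'n) \<Rightarrow> (real \<Rightarrow> real^'k) \<Rightarrow> (real \<Rightarrow> real^'n) \<Rightarrow> (real \<Rightarrow> real^'n) \<Rightarrow> bool" where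
  "adjoint_sol T Dx x u v lam \<longleftrightarrow>
     (\<forall>t\<in>{0..T}. ((\<lambda>s. - (transpose (Dx s (x s) (u s)) *v lam s) - v s)
        has_integral (lam t - lam 0)) {0..t})"

end

theory Submission
  imports Defs
begin

text \<open>
  Both the state difference \<open>x - x\<^sub>b\<close> and the time-reversed adjoint difference satisfy an integral
  equation \<open>e' = q + (g - q)\<close> in which \<open>q\<close> is a contracting direction for the relevant norm
  (\<open>\<parallel>\<cdot>\<parallel>\<close> for the state, by the logarithmic norm of \<open>D\<^sub>xf\<close> along segments; \<open>\<parallel>\<cdot>\<parallel>\<^sub>\<star>\<close> for the adjoint,
  because \<open>\<parallel>A\<^sup>T\<parallel>\<^sub>\<star>\<close> is controlled by \<open>\<parallel>A\<parallel>\<close>) and the remainder is bounded, \<open>\<parallel>g - q\<parallel> \<le> R\<close>.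
  A Gronwall-type comparison then gives \<open>\<parallel>e t\<parallel> \<le> e\<^sup>-\<^sup>c\<^sup>t \<parallel>e 0\<parallel> + R (1 - e\<^sup>-\<^sup>c\<^sup>t) / c\<close>; since the
  solutions are only Caratheodory, it is proved on Henstock-Kurzweil Riemann sums whose tags are
  interval endpoints, using an explicit Euler step at left tags and an implicit one at right tags.
  For the state \<open>R = \<ell>\<^sub>f\<^sub>,\<^sub>u sup \<parallel>u - u\<^sub>b\<parallel>\<^sub>U\<close>, which feeds into the adjoint remainder
  \<open>R = \<ell>\<^sub>f\<^sub>x\<^sub>,\<^sub>x sup \<parallel>x - x\<^sub>b\<parallel> + \<ell>\<^sub>f\<^sub>x\<^sub>,\<^sub>u sup \<parallel>u - u\<^sub>b\<parallel>\<^sub>U + sup \<parallel>v - v\<^sub>b\<parallel>\<^sub>\<star>\<close>.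
\<close>

section \<open>General norms on Euclidean spaces\<close>

locale vector_norm =
  fixes N :: "'a::euclidean_space \<Rightarrow> real"
  assumes is_norm: "is_norm N"
begin

lemma nonneg [simp]: "0 \<le> N x"
  using is_norm unfolding is_norm_def by blast

lemma eq_0_iff [simp]: "N x = 0 \<longleftrightarrow> x = 0"
  using is_norm unfolding is_norm_def by blast

lemma scale [simp]: "N (a *\<^sub>R x) = \<bar>a\<bar> * N x"
  using is_norm unfolding is_norm_def by blast

lemma triangle: "N (x + y) \<le> N x + N y"
  using is_norm unfolding is_norm_def by blast

lemma zero [simp]: "N 0 = 0"
  by simp

lemma minus [simp]: "N (- x) = N x"
  using scale[of "-1" x] by simp

lemma reverse_triangle: "N x - N y \<le> N (x - y)"
  using triangle[of "x - y" y] by simp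

lemma triangle3: "N (x + y + z) \<le> N x + N y + N z"
  using triangle[of "x + y" z] triangle[of x y] by linarith

lemma triangle_telescope: "N (x - z + w) \<le> N (x - y) + N (y - z) + N w"
proof -
  have "x - z + w = (x - y) + (y - z) + w" by simp
  then show ?thesis by (simp only: triangle3)
qed

lemma sum_le: "N (sum f A) \<le> (\<Sum>i\<in>A. N (f i))"
proof (induction A rule: infinite_finite_induct)
  case (insert a A)
  then show ?case using triangle[of "f a" "sum f A"] by simp
qed simp_all

lemma le_norm: "\<exists>C>0. \<forall>x. N x \<le> C * norm x"
proof -
  define C where "C = 1 + (\<Sum>b\<in>Basis. N b)"
  have "C > 0" unfolding C_def by (simp add: add_pos_nonneg sum_nonneg)
  moreover have "N x \<le> C * norm x" for x
  proof -
    have "N x = N (\<Sum>b\<in>Basis. (x \<bullet> b) *\<^sub>R b)" by (simp add: euclidean_representation)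
    also have "\<dots> \<le> (\<Sum>b\<in>Basis. \<bar>x \<bullet> b\<bar> * N b)"
      using sum_le[of "\<lambda>b. (x \<bullet> b) *\<^sub>R b" Basis] by simp
    also have "\<dots> \<le> (\<Sum>b\<in>Basis. norm x * N b)"
      by (intro sum_mono mult_right_mono) (auto simp: Basis_le_norm)
    also have "\<dots> \<le> C * norm x" unfolding C_def by (simp add: sum_distrib_left algebra_simps)
    finally show ?thesis .
  qed
  ultimately show ?thesis by blast
qed

lemma continuous: "continuous_on S N"
proof -
  obtain C where C: "C > 0" "\<And>x. N x \<le> C * norm x" using le_norm by blast
  have "\<bar>N x - N y\<bar> \<le> C * dist x y" for x y
    using reverse_triangle[of x y] reverse_triangle[of y x] C(2)[of "x - y"] C(2)[of "y - x"]
    by (auto simp: dist_norm norm_minus_commute)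
  then have "C-lipschitz_on S N" by (intro lipschitz_onI) (auto simp: dist_real_def less_imp_le C)
  then show ?thesis by (rule lipschitz_on_continuous_on)
qed

text \<open>\<open>N\<close> attains a positive minimum on the Euclidean unit sphere.\<close>

lemma norm_le: "\<exists>C>0. \<forall>x. norm x \<le> C * N x"
proof -
  have "sphere (0::'a) 1 \<noteq> {}"
    using vector_choose_size[of 1] by (auto simp: sphere_def)
  then obtain z where z: "z \<in> sphere 0 1" "\<And>y. y \<in> sphere 0 1 \<Longrightarrow> N z \<le> N y"
    using continuous_attains_inf[OF compact_sphere _ continuous] by blast
  then have m: "N z > 0" using nonneg[of z] by (auto simp: less_le)
  have "norm x \<le> (1 / N z) * N x" for x
  proof (cases "x = 0")
    case False
    then have "(1 / norm x) *\<^sub>R x \<in> sphere 0 1" by simp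
    from z(2)[OF this] have "N z \<le> N x / norm x" by simp
    then show ?thesis using m False by (simp add: field_simps)
  qed simp
  then show ?thesis using m by (intro exI[of _ "1 / N z"]) auto
qed

lemma exists_unit: "\<exists>x. N x = 1"
proof -
  obtain v :: 'a where "norm v = 1" using vector_choose_size[of 1] by auto
  then have "v \<noteq> 0" by auto
  then show ?thesis by (intro exI[of _ "(1 / N v) *\<^sub>R v"]) simp
qed

lemma coefficient_nonneg:
  assumes "\<And>y. 0 \<le> L * N y"
  shows "0 \<le> L"
proof -
  obtain y where "N y = 1" using exists_unit by blast
  with assms[of y] show ?thesis by simp
qed

lemma bdd_above_diff_image:
  assumes "bounded S" and "\<And>t. t \<in> A \<Longrightarrow> a t \<in> S \<and> b t \<in> S"
  shows "bdd_above ((\<lambda>t. N (a t - b t)) ` A)"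
proof -
  obtain C where C: "C > 0" "\<And>x. N x \<le> C * norm x" using le_norm by blast
  obtain B where B: "\<And>x. x \<in> S \<Longrightarrow> norm x \<le> B" using assms(1) unfolding bounded_iff by blast
  have "N (a t - b t) \<le> C * (B + B)" if "t \<in> A" for t
  proof -
    have "N (a t - b t) \<le> C * norm (a t - b t)" by (rule C(2))
    also have "\<dots> \<le> C * (B + B)"
      using B[of "a t"] B[of "b t"] assms(2)[OF that] norm_triangle_ineq4[of "a t" "b t"] C(1)
      by (intro mult_left_mono) auto
    finally show ?thesis .
  qed
  then show ?thesis by (rule bdd_aboveI2)
qed

end

section \<open>Dual and induced norms\<close>

lemma norm_matrix_vector_mult_le:
  fixes A :: "real^'n^'m"
  shows "norm (A *v x) \<le> (real CARD('m) * real CARD('n) * norm A) * norm x"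
proof -
  have "\<bar>A $ i $ j\<bar> \<le> norm A" for i j
  proof -
    have "norm (A $ i) \<le> norm A" by (rule Finite_Cartesian_Product.norm_nth_le)
    then show ?thesis using component_le_norm_cart[of "A $ i" j] by linarith
  qed
  then have "onorm ((*v) A) \<le> real CARD('m) * real CARD('n) * norm A"
    by (rule onorm_le_matrix_component)
  moreover have "norm (A *v x) \<le> onorm ((*v) A) * norm x"
    by (rule onorm) (simp add: matrix_vector_mul_bounded_linear)
  ultimately show ?thesis by (meson mult_right_mono norm_ge_zero order_trans)
qed

locale cart_norm = vector_norm N for N :: "real^'n \<Rightarrow> real"
begin

lemma inner_le_dual_norm:
  assumes "N y \<le> 1"
  shows "y \<bullet> z \<le> dual_norm N z"
proof -
  obtain C where C: "C > 0" "\<And>x. norm x \<le> C * N x" using norm_le by blast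
  have "y' \<bullet> z \<le> C * norm z" if "N y' \<le> 1" for y'
  proof -
    have "y' \<bullet> z \<le> norm y' * norm z" by (rule norm_cauchy_schwarz)
    also have "\<dots> \<le> C * norm z"
      using C(2)[of y'] that C(1) by (intro mult_right_mono) (auto intro: order_trans)
    finally show ?thesis .
  qed
  then have "bdd_above {y \<bullet> z | y. N y \<le> 1}" by (intro bdd_aboveI[of _ "C * norm z"]) auto
  then show ?thesis unfolding dual_norm_def using assms by (intro cSup_upper) auto
qed

lemma dual_norm_le:
  assumes "\<And>y. N y \<le> 1 \<Longrightarrow> y \<bullet> z \<le> M"
  shows "dual_norm N z \<le> M"
proof -
  have "0 \<bullet> z \<in> {y \<bullet> z | y. N y \<le> 1}" by (rule CollectI, rule exI[of _ 0]) simp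
  then show ?thesis unfolding dual_norm_def by (intro cSup_least) (use assms in auto)
qed

lemma inner_le_norm_mult_dual_norm: "y \<bullet> z \<le> N y * dual_norm N z"
proof (cases "y = 0")
  case False
  then have p: "N y > 0" using nonneg[of y] by (auto simp: less_le)
  then have "N ((1 / N y) *\<^sub>R y) \<le> 1" by simp
  from inner_le_dual_norm[OF this, of z] have "(y \<bullet> z) / N y \<le> dual_norm N z" by simp
  then show ?thesis using p by (simp add: field_simps)
qed simp

lemma dual_norm_scale_le: "dual_norm N (r *\<^sub>R z) \<le> \<bar>r\<bar> * dual_norm N z"
proof (rule dual_norm_le)
  fix y assume y: "N y \<le> 1"
  then have "N (sgn r *\<^sub>R y) \<le> 1" by (simp add: abs_sgn_eq)
  from inner_le_dual_norm[OF this, of z] have "sgn r * (y \<bullet> z) \<le> dual_norm N z" by simp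
  then have "\<bar>r\<bar> * (sgn r * (y \<bullet> z)) \<le> \<bar>r\<bar> * dual_norm N z" by (rule mult_left_mono) simp
  then show "y \<bullet> (r *\<^sub>R z) \<le> \<bar>r\<bar> * dual_norm N z" by (simp add: abs_mult_sgn mult.assoc[symmetric])
qed

lemma is_norm_dual_norm: "is_norm (dual_norm N)"
proof -
  have nonneg: "0 \<le> dual_norm N z" for z
    using inner_le_dual_norm[of 0 z] by simp
  have scale: "dual_norm N (r *\<^sub>R z) = \<bar>r\<bar> * dual_norm N z" for r z
  proof (cases "r = 0")
    case True
    then show ?thesis using dual_norm_scale_le[of 0 z] nonneg[of 0] by simp
  next
    case False
    have "dual_norm N z = dual_norm N ((1 / r) *\<^sub>R (r *\<^sub>R z))" using False by simp
    also have "\<dots> \<le> \<bar>1 / r\<bar> * dual_norm N (r *\<^sub>R z)" by (rule dual_norm_scale_le)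
    finally have "\<bar>r\<bar> * dual_norm N z \<le> dual_norm N (r *\<^sub>R z)" using False by (simp add: field_simps)
    then show ?thesis using dual_norm_scale_le[of r z] by linarith
  qed
  have definite: "z = 0" if "dual_norm N z = 0" for z
  proof (rule ccontr)
    assume "z \<noteq> 0"
    then have "N z > 0" using nonneg[of z] by (auto simp: less_le)
    then have "(z \<bullet> z) / N z \<le> dual_norm N z"
      using inner_le_dual_norm[of "(1 / N z) *\<^sub>R z" z] by simp
    moreover have "0 < (z \<bullet> z) / N z" using \<open>z \<noteq> 0\<close> \<open>N z > 0\<close> by simp
    ultimately show False using that by linarith
  qed
  have zero: "dual_norm N 0 = 0"
    using scale[of 0 0] by simp
  have "dual_norm N (a + b) \<le> dual_norm N a + dual_norm N b" for a b
    by (rule dual_norm_le) (simp add: inner_add_right add_mono inner_le_dual_norm)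
  with nonneg scale definite zero show ?thesis
    unfolding is_norm_def by blast
qed

sublocale dual: vector_norm "dual_norm N"
  by unfold_locales (rule is_norm_dual_norm)

lemma matrix_vector_bound: "\<exists>K>0. \<forall>(A::real^'n^'n) x. N (A *v x) \<le> K * norm A * N x"
proof -
  obtain Cm where Cm: "Cm > 0" "\<And>x. norm x \<le> Cm * N x" using norm_le by blast
  obtain Cn where Cn: "Cn > 0" "\<And>x. N x \<le> Cn * norm x" using le_norm by blast
  define K where "K = Cn * (real CARD('n) * real CARD('n)) * Cm"
  have "N (A *v x) \<le> K * norm A * N x" for A :: "real^'n^'n" and x
  proof -
    have "N (A *v x) \<le> Cn * norm (A *v x)" by (rule Cn(2))
    also have "\<dots> \<le> Cn * ((real CARD('n) * real CARD('n) * norm A) * norm x)"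
      using norm_matrix_vector_mult_le[of A x] Cn(1) by (simp add: mult_left_mono)
    also have "\<dots> \<le> Cn * ((real CARD('n) * real CARD('n) * norm A) * (Cm * N x))"
      using Cm(2)[of x] Cn(1) by (intro mult_left_mono) (auto intro!: mult_left_mono)
    also have "\<dots> = K * norm A * N x" unfolding K_def by (simp add: algebra_simps)
    finally show ?thesis .
  qed
  moreover have "K > 0" unfolding K_def using Cm Cn by simp
  ultimately show ?thesis by blast
qed

lemma le_induced_norm:
  assumes "N x = 1"
  shows "N (A *v x) \<le> induced_norm N A"
proof -
  obtain K where K: "\<And>(A::real^'n^'n) x. N (A *v x) \<le> K * norm A * N x"
    using matrix_vector_bound by blast
  have "bdd_above {N (A *v x) | x. N x = 1}"
    by (rule bdd_aboveI[of _ "K * norm A"]) (auto, metis K mult.right_neutral)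
  then show ?thesis unfolding induced_norm_def using assms by (intro cSup_upper) auto
qed

lemma induced_norm_le:
  assumes "\<And>x. N x = 1 \<Longrightarrow> N (A *v x) \<le> M"
  shows "induced_norm N A \<le> M"
  unfolding induced_norm_def using exists_unit assms by (intro cSup_least) auto

lemma induced_norm_nonneg: "0 \<le> induced_norm N A"
proof -
  obtain x where "N x = 1" using exists_unit by blast
  from le_induced_norm[OF this, of A] show ?thesis using nonneg[of "A *v x"] by linarith
qed

lemma mult_le_induced_norm: "N (A *v x) \<le> induced_norm N A * N x"
proof (cases "x = 0")
  case False
  then have p: "N x > 0" using nonneg[of x] by (auto simp: less_le)
  then have "N ((1 / N x) *\<^sub>R x) = 1" using False by simp
  from le_induced_norm[OF this, of A] have "N (A *v x) / N x \<le> induced_norm N A"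
    by (simp add: matrix_vector_mult_scaleR)
  then show ?thesis using p by (simp add: field_simps)
qed simp

lemma induced_norm_le_norm: "\<exists>K>0. \<forall>A::real^'n^'n. induced_norm N A \<le> K * norm A"
proof -
  obtain K where K: "K > 0" "\<And>(A::real^'n^'n) x. N (A *v x) \<le> K * norm A * N x"
    using matrix_vector_bound by blast
  have "induced_norm N A \<le> K * norm A" for A
    by (rule induced_norm_le) (metis K(2) mult.right_neutral)
  with K(1) show ?thesis by blast
qed

lemma induced_norm_triangle: "induced_norm N (A + B) \<le> induced_norm N A + induced_norm N B"
proof (rule induced_norm_le)
  fix x assume x: "N x = 1"
  have "N ((A + B) *v x) \<le> N (A *v x) + N (B *v x)"
    by (simp add: matrix_vector_mult_add_rdistrib triangle)
  also have "\<dots> \<le> induced_norm N A + induced_norm N B" using le_induced_norm[OF x] by (simp add: add_mono)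
  finally show "N ((A + B) *v x) \<le> induced_norm N A + induced_norm N B" .
qed

lemma induced_norm_scale_le: "induced_norm N (r *\<^sub>R A) \<le> \<bar>r\<bar> * induced_norm N A"
proof (rule induced_norm_le)
  fix x assume x: "N x = 1"
  have "N ((r *\<^sub>R A) *v x) = \<bar>r\<bar> * N (A *v x)"
    by (simp add: scaleR_matrix_vector_assoc[symmetric])
  also have "\<dots> \<le> \<bar>r\<bar> * induced_norm N A" using le_induced_norm[OF x] by (simp add: mult_left_mono)
  finally show "N ((r *\<^sub>R A) *v x) \<le> \<bar>r\<bar> * induced_norm N A" .
qed

lemma induced_norm_id: "induced_norm N (mat 1) = 1"
proof (rule antisym)
  show "induced_norm N (mat 1) \<le> 1" by (rule induced_norm_le) simp
  obtain x where "N x = 1" using exists_unit by blast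
  with le_induced_norm[OF this, of "mat 1"] show "1 \<le> induced_norm N (mat 1)" by simp
qed

lemma dual_norm_transpose_le: "dual_norm N (transpose A *v z) \<le> induced_norm N A * dual_norm N z"
proof (rule dual_norm_le)
  fix y assume y: "N y \<le> 1"
  have "y \<bullet> (transpose A *v z) = (A *v y) \<bullet> z"
    by (metis dot_lmul_matrix inner_commute transpose_matrix_vector)
  also have "\<dots> \<le> N (A *v y) * dual_norm N z" by (rule inner_le_norm_mult_dual_norm)
  also have "\<dots> \<le> (induced_norm N A * N y) * dual_norm N z"
    by (intro mult_right_mono mult_le_induced_norm dual.nonneg)
  also have "\<dots> \<le> induced_norm N A * dual_norm N z"
    using y induced_norm_nonneg[of A] dual.nonneg[of z] nonneg[of y]
    by (simp add: mult.commute mult.left_commute mult_left_le_one_le mult_nonneg_nonneg)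
  finally show "y \<bullet> (transpose A *v z) \<le> induced_norm N A * dual_norm N z" .
qed

end

section \<open>The logarithmic norm\<close>

definition log_norm_quotient :: "(real^'n \<Rightarrow> real) \<Rightarrow> real^'n^'n \<Rightarrow> real \<Rightarrow> real" where
  "log_norm_quotient N A h = (induced_norm N (mat 1 + h *\<^sub>R A) - 1) / h"

context cart_norm
begin

text \<open>This is the convexity of \<open>h \<mapsto> \<parallel>I + h A\<parallel>\<close>.\<close>

lemma log_norm_quotient_mono:
  assumes "0 < h1" "h1 \<le> h2"
  shows "log_norm_quotient N A h1 \<le> log_norm_quotient N A h2"
proof -
  define s where "s = h1 / h2"
  have h2: "h2 > 0" using assms by linarith
  have s: "0 < s" "s \<le> 1" unfolding s_def using assms h2 by auto
  have "mat 1 + h1 *\<^sub>R A = s *\<^sub>R (mat 1 + h2 *\<^sub>R A) + (1 - s) *\<^sub>R mat 1"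
    unfolding s_def using h2 by (simp add: algebra_simps)
  then have "induced_norm N (mat 1 + h1 *\<^sub>R A)
      \<le> induced_norm N (s *\<^sub>R (mat 1 + h2 *\<^sub>R A)) + induced_norm N ((1 - s) *\<^sub>R mat 1)"
    by (metis induced_norm_triangle)
  also have "\<dots> \<le> s * induced_norm N (mat 1 + h2 *\<^sub>R A) + (1 - s) * induced_norm N (mat 1)"
    using induced_norm_scale_le[of s] induced_norm_scale_le[of "1 - s"] s by (intro add_mono) auto
  finally have "induced_norm N (mat 1 + h1 *\<^sub>R A) - 1 \<le> s * (induced_norm N (mat 1 + h2 *\<^sub>R A) - 1)"
    by (simp add: induced_norm_id algebra_simps)
  then have "log_norm_quotient N A h1 \<le> s * (induced_norm N (mat 1 + h2 *\<^sub>R A) - 1) / h1"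
    unfolding log_norm_quotient_def using assms(1) by (simp add: divide_right_mono)
  also have "\<dots> = log_norm_quotient N A h2"
    unfolding s_def log_norm_quotient_def using assms(1) h2 by simp
  finally show ?thesis .
qed

lemma log_norm_quotient_lower: "0 < h \<Longrightarrow> - induced_norm N A \<le> log_norm_quotient N A h"
proof -
  assume h: "0 < h"
  have "induced_norm N (mat 1) \<le> induced_norm N (mat 1 + h *\<^sub>R A) + induced_norm N ((- h) *\<^sub>R A)"
    using induced_norm_triangle[of "mat 1 + h *\<^sub>R A" "(- h) *\<^sub>R A"] by simp
  also have "\<dots> \<le> induced_norm N (mat 1 + h *\<^sub>R A) + h * induced_norm N A"
    using induced_norm_scale_le[of "- h" A] h by simp
  finally show ?thesis
    unfolding log_norm_quotient_def using h by (simp add: induced_norm_id field_simps)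
qed

lemma log_norm_eq_Inf: "log_norm N A = Inf (log_norm_quotient N A ` {0<..})"
proof -
  let ?g = "log_norm_quotient N A"
  define L where "L = Inf (?g ` {0<..})"
  have bdd: "bdd_below (?g ` {0<..})"
    using log_norm_quotient_lower by (intro bdd_belowI[of _ "- induced_norm N A"]) auto
  have "(?g \<longlongrightarrow> L) (at_right 0)"
  proof (rule order_tendstoI)
    fix a assume "a < L"
    moreover have "L \<le> ?g h" if "h > 0" for h
      unfolding L_def by (rule cInf_lower[OF _ bdd]) (use that in auto)
    ultimately show "eventually (\<lambda>h. a < ?g h) (at_right 0)"
      using eventually_at_right_real[of 0 1] by (auto elim!: eventually_mono intro: less_le_trans)
  next
    fix a assume "L < a"
    then obtain h0 where h0: "h0 > 0" "?g h0 < a"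
      unfolding L_def using cInf_less_iff[OF _ bdd] by auto
    moreover have "?g h \<le> ?g h0" if "h \<in> {0<..<h0}" for h
      using log_norm_quotient_mono[of h h0 A] that by auto
    ultimately have "?g h < a" if "h \<in> {0<..<h0}" for h
      using that by fastforce
    then show "eventually (\<lambda>h. ?g h < a) (at_right 0)"
      using eventually_at_right_real[OF h0(1)] by (auto elim!: eventually_mono)
  qed
  then show ?thesis
    unfolding log_norm_def L_def log_norm_quotient_def[abs_def] by (intro tendsto_Lim) auto
qed

lemma induced_norm_id_plus_small_le:
  assumes "log_norm N A \<le> m" and "0 < e"
  shows "\<exists>h0>0. \<forall>h. 0 < h \<longrightarrow> h < h0 \<longrightarrow> induced_norm N (mat 1 + h *\<^sub>R A) \<le> 1 + h * (m + e)"
proof -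
  have "Inf (log_norm_quotient N A ` {0<..}) < m + e"
    using assms log_norm_eq_Inf by simp
  moreover have "bdd_below (log_norm_quotient N A ` {0<..})"
    using log_norm_quotient_lower by (intro bdd_belowI[of _ "- induced_norm N A"]) auto
  ultimately obtain h0 where h0: "h0 > 0" "log_norm_quotient N A h0 < m + e"
    using cInf_less_iff[of "log_norm_quotient N A ` {0<..}"] by auto
  have "induced_norm N (mat 1 + h *\<^sub>R A) \<le> 1 + h * (m + e)" if "0 < h" "h < h0" for h
  proof -
    have "(induced_norm N (mat 1 + h *\<^sub>R A) - 1) / h < m + e"
      using log_norm_quotient_mono[of h h0 A] h0 that unfolding log_norm_quotient_def by linarith
    then have "induced_norm N (mat 1 + h *\<^sub>R A) - 1 < (m + e) * h"
      using that(1) by (simp add: pos_divide_less_eq)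
    then show ?thesis by (simp add: algebra_simps)
  qed
  with h0 show ?thesis by blast
qed

text \<open>Via a finite net of \<open>[0, 1]\<close> and the uniform continuity of \<open>M\<close>.\<close>

lemma uniform_induced_norm_id_plus_small_le:
  fixes M :: "real \<Rightarrow> real^'n^'n"
  assumes cont: "continuous_on {0..1} M"
    and log: "\<And>\<theta>. \<theta> \<in> {0..1} \<Longrightarrow> log_norm N (M \<theta>) \<le> m"
    and "0 < \<epsilon>"
  shows "\<exists>\<eta>0>0. \<forall>\<eta> \<theta>. 0 < \<eta> \<longrightarrow> \<eta> < \<eta>0 \<longrightarrow> \<theta> \<in> {0..1} \<longrightarrow>
           induced_norm N (mat 1 + \<eta> *\<^sub>R M \<theta>) \<le> 1 + \<eta> * (m + \<epsilon>)"
proof -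
  obtain K where K: "K > 0" "\<And>A. induced_norm N A \<le> K * norm A"
    using induced_norm_le_norm by blast
  have "uniformly_continuous_on {0..1} M"
    by (rule compact_uniformly_continuous[OF cont compact_Icc])
  moreover have "\<epsilon> / (2 * K) > 0" using \<open>0 < \<epsilon>\<close> K(1) by simp
  ultimately obtain r where r: "r > 0"
    "\<forall>\<theta>\<in>{0..1}. \<forall>\<theta>'\<in>{0..1}. dist \<theta>' \<theta> < r \<longrightarrow> dist (M \<theta>') (M \<theta>) < \<epsilon> / (2 * K)"
    unfolding uniformly_continuous_on_def by blast
  obtain F :: "real set" where F: "finite F" "F \<subseteq> {0..1}" "{0..1} \<subseteq> (\<Union>\<theta>\<in>F. ball \<theta> r)"
    using seq_compact_imp_totally_bounded[OF compact_imp_seq_compact[OF compact_Icc[of 0 1]], rule_format, OF r(1)]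
    by blast
  define small where "small \<theta> h \<longleftrightarrow> 0 < h \<and> (\<forall>\<eta>. 0 < \<eta> \<longrightarrow> \<eta> < h \<longrightarrow>
      induced_norm N (mat 1 + \<eta> *\<^sub>R M \<theta>) \<le> 1 + \<eta> * (m + \<epsilon> / 2))" for \<theta> h
  have small_ex: "\<exists>h. small \<theta> h" if "\<theta> \<in> F" for \<theta>
  proof -
    have "log_norm N (M \<theta>) \<le> m" using that F(2) by (intro log) auto
    then show ?thesis
      unfolding small_def using induced_norm_id_plus_small_le[of "M \<theta>" m "\<epsilon> / 2"] \<open>0 < \<epsilon>\<close> by simp
  qed
  define h where "h \<theta> = (SOME h. small \<theta> h)" for \<theta>
  have h: "small \<theta> (h \<theta>)" if "\<theta> \<in> F" for \<theta>
    unfolding h_def by (rule someI_ex[OF small_ex[OF that]])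
  have "F \<noteq> {}" using F(3) by auto
  define \<eta>0 where "\<eta>0 = Min (h ` F)"
  have "\<eta>0 > 0" unfolding \<eta>0_def using F(1) h \<open>F \<noteq> {}\<close> by (simp add: small_def)
  moreover have "induced_norm N (mat 1 + \<eta> *\<^sub>R M \<theta>) \<le> 1 + \<eta> * (m + \<epsilon>)"
    if \<eta>: "0 < \<eta>" "\<eta> < \<eta>0" and \<theta>: "\<theta> \<in> {0..1}" for \<eta> \<theta>
  proof -
    obtain \<theta>0 where \<theta>0: "\<theta>0 \<in> F" "dist \<theta>0 \<theta> < r" using F(3) \<theta> by auto
    have "\<eta>0 \<le> h \<theta>0" unfolding \<eta>0_def using F(1) \<theta>0(1) by simp
    then have near: "induced_norm N (mat 1 + \<eta> *\<^sub>R M \<theta>0) \<le> 1 + \<eta> * (m + \<epsilon> / 2)"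
      using h[OF \<theta>0(1)] \<eta> unfolding small_def by simp
    have "dist (M \<theta>) (M \<theta>0) < \<epsilon> / (2 * K)"
      using r(2) \<theta>0 F(2) \<theta> by (auto simp: dist_commute)
    then have "K * norm (M \<theta> - M \<theta>0) < \<epsilon> / 2"
      using K(1) by (simp add: dist_norm pos_less_divide_eq mult.commute mult.left_commute)
    then have far: "induced_norm N (M \<theta> - M \<theta>0) \<le> \<epsilon> / 2"
      using K(2)[of "M \<theta> - M \<theta>0"] by linarith
    have split: "mat 1 + \<eta> *\<^sub>R M \<theta> = (mat 1 + \<eta> *\<^sub>R M \<theta>0) + \<eta> *\<^sub>R (M \<theta> - M \<theta>0)"
      by (simp add: algebra_simps)
    have "induced_norm N (mat 1 + \<eta> *\<^sub>R M \<theta>)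
        \<le> induced_norm N (mat 1 + \<eta> *\<^sub>R M \<theta>0) + induced_norm N (\<eta> *\<^sub>R (M \<theta> - M \<theta>0))"
      unfolding split by (rule induced_norm_triangle)
    also have "induced_norm N (\<eta> *\<^sub>R (M \<theta> - M \<theta>0)) \<le> \<eta> * induced_norm N (M \<theta> - M \<theta>0)"
      using induced_norm_scale_le[of \<eta>] \<eta>(1) by simp
    also have "\<dots> \<le> \<eta> * (\<epsilon> / 2)" using far \<eta>(1) by (simp add: mult_left_mono)
    finally show ?thesis using near by (simp add: algebra_simps)
  qed
  ultimately show ?thesis by blast
qed

end

section \<open>Comparison by local increments\<close>

text \<open>
  By bisection: an interval without such a division, shrinking to \<open>x\<close>, is split at \<open>x\<close> into two
  intervals tagged at their common endpoint.
\<close>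

lemma fine_division_exists_endpoints:
  fixes a b :: real
  assumes "gauge \<gamma>"
  obtains p where "p tagged_division_of {a..b}" "\<gamma> fine p" "\<And>x K. (x,K) \<in> p \<Longrightarrow> x = Inf K \<or> x = Sup K"
proof -
  let ?P = "\<lambda>s. \<exists>p. p tagged_division_of s \<and> \<gamma> fine p \<and> (\<forall>x K. (x,K)\<in>p \<longrightarrow> x = Inf K \<or> x = Sup K)"
  have "?P (cbox a b)"
  proof (rule ccontr)
    assume False: "\<not> ?P (cbox a b)"
    obtain x where x: "x \<in> cbox a b"
      "\<And>e. 0 < e \<Longrightarrow> \<exists>c d. x \<in> cbox c d \<and> cbox c d \<subseteq> ball x e \<and> cbox c d \<subseteq> cbox a b \<and> \<not> ?P (cbox c d)"
    proof (rule interval_bisection[of ?P, OF _ _ False])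
      show "?P {}" by (intro exI[of _ "{}"]) (simp add: fine_def)
    next
      fix S T assume PS: "?P S" and PT: "?P T" and disj: "interior S \<inter> interior T = {}"
      from PS obtain p1 where p1: "p1 tagged_division_of S" "\<gamma> fine p1" "\<forall>x K. (x,K)\<in>p1 \<longrightarrow> x = Inf K \<or> x = Sup K"
        by blast
      from PT obtain p2 where p2: "p2 tagged_division_of T" "\<gamma> fine p2" "\<forall>x K. (x,K)\<in>p2 \<longrightarrow> x = Inf K \<or> x = Sup K"
        by blast
      have "p1 \<union> p2 tagged_division_of S \<union> T" by (rule tagged_division_Un[OF p1(1) p2(1) disj])
      moreover have "\<gamma> fine (p1 \<union> p2)" by (rule fine_Un[OF p1(2) p2(2)])
      moreover have "\<forall>x K. (x,K)\<in>p1 \<union> p2 \<longrightarrow> x = Inf K \<or> x = Sup K" using p1(3) p2(3) by blast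
      ultimately show "?P (S \<union> T)" by blast
    qed auto
    obtain e where e: "e > 0" "ball x e \<subseteq> \<gamma> x"
      by (meson assms gauge_def openE)
    then obtain c d where cd: "x \<in> cbox c d" "cbox c d \<subseteq> ball x e" "cbox c d \<subseteq> cbox a b" "\<not> ?P (cbox c d)"
      by (meson x(2))
    have cxd: "c \<le> x" "x \<le> d" using cd(1) by auto
    have t1: "{(x, {c..x})} tagged_division_of {c..x}" by (rule tagged_division_of_self_real) (use cxd in auto)
    have t2: "{(x, {x..d})} tagged_division_of {x..d}" by (rule tagged_division_of_self_real) (use cxd in auto)
    have "{(x, {c..x})} \<union> {(x, {x..d})} tagged_division_of {c..x} \<union> {x..d}"
      by (rule tagged_division_Un[OF t1 t2]) auto
    moreover have "{c..x} \<union> {x..d} = cbox c d" using cxd by auto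
    moreover have "\<gamma> fine ({(x, {c..x})} \<union> {(x, {x..d})})"
      using cd(2) e(2) cxd unfolding fine_def by (auto simp: subset_iff)
    moreover have "\<forall>y K. (y,K)\<in>{(x, {c..x})} \<union> {(x, {x..d})} \<longrightarrow> y = Inf K \<or> y = Sup K"
      using cxd by auto
    ultimately have "?P (cbox c d)" by metis
    then show False using cd(4) by blast
  qed
  then show ?thesis using that by (metis box_real(2))
qed

text \<open>
  Telescoping over a fine division tagged at endpoints; Henstock's lemma keeps the accumulated
  quadrature errors of \<open>g\<close> small.
\<close>

lemma le_by_local_increments:
  fixes \<psi> :: "real \<Rightarrow> real" and g :: "real \<Rightarrow> 'a::euclidean_space"
  assumes "a \<le> b" and g: "g integrable_on {a..b}" and "0 \<le> C"
    and local: "\<And>x \<delta>. x \<in> {a..b} \<Longrightarrow> 0 < \<delta> \<Longrightarrow> \<exists>r>0. \<forall>\<alpha> \<beta>.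
        a \<le> \<alpha> \<longrightarrow> \<alpha> \<le> x \<longrightarrow> x \<le> \<beta> \<longrightarrow> \<beta> \<le> b \<longrightarrow> \<beta> - \<alpha> < r \<longrightarrow> (x = \<alpha> \<or> x = \<beta>) \<longrightarrow>
        \<psi> \<beta> - \<psi> \<alpha> \<le> \<delta> * (\<beta> - \<alpha>) + C * norm (integral {\<alpha>..\<beta>} g - (\<beta> - \<alpha>) *\<^sub>R g x)"
  shows "\<psi> b \<le> \<psi> a"
proof (rule field_le_epsilon)
  fix \<epsilon> :: real assume "0 < \<epsilon>"
  define \<delta> where "\<delta> = \<epsilon> / (2 * (b - a + 1))"
  have \<delta>: "0 < \<delta>" "\<delta> * (b - a) \<le> \<epsilon> / 2"
    using \<open>0 < \<epsilon>\<close> \<open>a \<le> b\<close> by (auto simp: \<delta>_def field_simps)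
  have int: "g integrable_on cbox a b" using g by simp
  have pos: "0 < \<epsilon> / (2 * (C + 1))" using \<open>0 < \<epsilon>\<close> \<open>0 \<le> C\<close> by simp
  obtain \<gamma> where \<gamma>: "gauge \<gamma>" "\<And>p. p tagged_partial_division_of cbox a b \<Longrightarrow> \<gamma> fine p \<Longrightarrow>
      (\<Sum>(x, I)\<in>p. norm (measure lborel I *\<^sub>R g x - integral I g)) < \<epsilon> / (2 * (C + 1))"
    by (rule Henstock_lemma[OF int pos]) blast
  define good where "good x r \<longleftrightarrow> 0 < r \<and> (\<forall>\<alpha> \<beta>.
        a \<le> \<alpha> \<longrightarrow> \<alpha> \<le> x \<longrightarrow> x \<le> \<beta> \<longrightarrow> \<beta> \<le> b \<longrightarrow> \<beta> - \<alpha> < r \<longrightarrow> (x = \<alpha> \<or> x = \<beta>) \<longrightarrow>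
        \<psi> \<beta> - \<psi> \<alpha> \<le> \<delta> * (\<beta> - \<alpha>) + C * norm (integral {\<alpha>..\<beta>} g - (\<beta> - \<alpha>) *\<^sub>R g x))" for x r
  have good_ex: "\<exists>r. good x r" if "x \<in> {a..b}" for x
    unfolding good_def by (rule local[OF that \<delta>(1)])
  define r where "r x = (SOME r. good x r)" for x
  have r: "good x (r x)" if "x \<in> {a..b}" for x
    unfolding r_def by (rule someI_ex[OF good_ex[OF that]])
  define \<gamma>' where "\<gamma>' x = \<gamma> x \<inter> ball x (if x \<in> {a..b} then r x / 2 else 1)" for x
  have "gauge \<gamma>'"
    unfolding \<gamma>'_def using \<gamma>(1) r unfolding good_def
    by (intro gauge_Int gauge_ball_dependent) auto
  then obtain p where p: "p tagged_division_of {a..b}" "\<gamma>' fine p" "\<And>x I. (x, I) \<in> p \<Longrightarrow> x = Inf I \<or> x = Sup I"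
    using fine_division_exists_endpoints by blast
  have increment: "\<psi> (Sup I) - \<psi> (Inf I) \<le> \<delta> * measure lborel I + C * norm (measure lborel I *\<^sub>R g x - integral I g)"
    if xI: "(x, I) \<in> p" for x I
  proof -
    obtain \<alpha> \<beta> where I: "I = {\<alpha>..\<beta>}" using p(1) xI by (metis box_real(2) tagged_division_ofD(4))
    have "x \<in> I" "I \<subseteq> {a..b}" using p(1) xI by (auto dest: tagged_division_ofD(2,3))
    then have ab: "\<alpha> \<le> x" "x \<le> \<beta>" "a \<le> \<alpha>" "\<beta> \<le> b" "x \<in> {a..b}" using I by auto
    have "I \<subseteq> \<gamma>' x" using p(2) xI unfolding fine_def by blast
    then have "I \<subseteq> ball x (r x / 2)" using ab(5) by (simp add: \<gamma>'_def)
    moreover have "\<alpha> \<in> I" "\<beta> \<in> I" using I ab(1,2) by auto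
    ultimately have "\<alpha> \<in> ball x (r x / 2)" "\<beta> \<in> ball x (r x / 2)" by blast+
    then have "\<beta> - \<alpha> < r x" using ab(1,2) by (auto simp: dist_real_def)
    moreover have "x = \<alpha> \<or> x = \<beta>" using p(3)[OF xI] I ab by auto
    ultimately have "\<psi> \<beta> - \<psi> \<alpha> \<le> \<delta> * (\<beta> - \<alpha>) + C * norm (integral {\<alpha>..\<beta>} g - (\<beta> - \<alpha>) *\<^sub>R g x)"
      using r[OF ab(5)] ab(1-4) unfolding good_def by blast
    then show ?thesis using I ab by (simp add: norm_minus_commute)
  qed
  have "\<psi> b - \<psi> a = (\<Sum>(x, I)\<in>p. \<psi> (Sup I) - \<psi> (Inf I))"
    using additive_tagged_division_1[OF \<open>a \<le> b\<close> p(1), of \<psi>] by simp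
  also have "\<dots> \<le> (\<Sum>(x, I)\<in>p. \<delta> * measure lborel I + C * norm (measure lborel I *\<^sub>R g x - integral I g))"
    using increment by (intro sum_mono) auto
  also have "\<dots> = \<delta> * (\<Sum>(x, I)\<in>p. measure lborel I) + C * (\<Sum>(x, I)\<in>p. norm (measure lborel I *\<^sub>R g x - integral I g))"
    by (simp add: split_def sum.distrib sum_distrib_left)
  also have "(\<Sum>(x, I)\<in>p. measure lborel I) = b - a"
    using additive_content_tagged_division[of p a b] p(1) \<open>a \<le> b\<close> by simp
  also have "C * (\<Sum>(x, I)\<in>p. norm (measure lborel I *\<^sub>R g x - integral I g)) \<le> C * (\<epsilon> / (2 * (C + 1)))"
  proof -
    have "p tagged_partial_division_of cbox a b" using p(1) by (simp add: tagged_division_of_def)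
    moreover have "\<gamma> fine p" using p(2) unfolding \<gamma>'_def fine_Int by blast
    ultimately have "(\<Sum>(x, I)\<in>p. norm (measure lborel I *\<^sub>R g x - integral I g)) < \<epsilon> / (2 * (C + 1))"
      by (rule \<gamma>(2))
    then show ?thesis using \<open>0 \<le> C\<close> by (intro mult_left_mono) auto
  qed
  also have "C * (\<epsilon> / (2 * (C + 1))) \<le> \<epsilon> / 2"
    using \<open>0 < \<epsilon>\<close> \<open>0 \<le> C\<close> by (simp add: field_simps)
  finally show "\<psi> b \<le> \<psi> a + \<epsilon>" using \<delta>(2) by linarith
qed

context vector_norm
begin

lemma mean_value_inequality:
  fixes G :: "'b::real_normed_vector \<Rightarrow> 'a"
  assumes deriv: "\<And>y. (G has_derivative G' y) (at y)"
    and bound: "\<And>\<theta>. \<theta> \<in> {0..1} \<Longrightarrow> N (G' (y0 + \<theta> *\<^sub>R (y1 - y0)) (y1 - y0)) \<le> a"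
  shows "N (G y1 - G y0) \<le> a"
proof -
  define P where "P \<theta> = y0 + \<theta> *\<^sub>R (y1 - y0)" for \<theta> :: real
  define \<psi> where "\<psi> \<theta> = N (G (P \<theta>) - G y0) - \<theta> * a" for \<theta>
  obtain C where C: "C > 0" "\<And>x. N x \<le> C * norm x" using le_norm by blast
  have local: "\<exists>r>0. \<forall>\<alpha> \<beta>. \<alpha> \<le> x \<longrightarrow> x \<le> \<beta> \<longrightarrow> \<beta> - \<alpha> < r \<longrightarrow> \<psi> \<beta> - \<psi> \<alpha> \<le> \<delta> * (\<beta> - \<alpha>)"
    if x: "x \<in> {0..1}" and "0 < \<delta>" for x \<delta>
  proof -
    define v where "v = G' (P x) (y1 - y0)"
    have "(P has_derivative (\<lambda>h. h *\<^sub>R (y1 - y0))) (at x)"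
      unfolding P_def by (auto intro!: derivative_eq_intros)
    from has_derivative_compose[OF this deriv]
    have "((\<lambda>\<theta>. G (P \<theta>)) has_derivative (\<lambda>h. h *\<^sub>R v)) (at x)"
      unfolding v_def using has_derivative_linear[OF deriv[of "P x"]]
      by (simp add: linear_scale)
    then have approx: "\<forall>e>0. \<exists>r>0. \<forall>\<theta>. norm (\<theta> - x) < r \<longrightarrow>
        norm (G (P \<theta>) - G (P x) - (\<theta> - x) *\<^sub>R v) \<le> e * norm (\<theta> - x)"
      unfolding has_derivative_at_alt by simp
    have "\<delta> / C > 0" using \<open>0 < \<delta>\<close> C(1) by simp
    from approx[rule_format, OF this] obtain r where r: "r > 0"
      "\<forall>\<theta>. norm (\<theta> - x) < r \<longrightarrow> norm (G (P \<theta>) - G (P x) - (\<theta> - x) *\<^sub>R v) \<le> \<delta> / C * norm (\<theta> - x)"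
      by (elim exE conjE) (rule that)
    define \<rho> where "\<rho> \<theta> = G (P \<theta>) - G (P x) - (\<theta> - x) *\<^sub>R v" for \<theta>
    have \<rho>: "N (\<rho> \<theta>) \<le> \<delta> * \<bar>\<theta> - x\<bar>" if "\<bar>\<theta> - x\<bar> < r" for \<theta>
    proof -
      have "N (\<rho> \<theta>) \<le> C * norm (\<rho> \<theta>)" by (rule C(2))
      also have "\<dots> \<le> C * (\<delta> / C * \<bar>\<theta> - x\<bar>)"
        using r(2) that C(1) unfolding \<rho>_def by (intro mult_left_mono) auto
      also have "\<dots> = \<delta> * \<bar>\<theta> - x\<bar>" using C(1) by simp
      finally show ?thesis .
    qed
    have "\<psi> \<beta> - \<psi> \<alpha> \<le> \<delta> * (\<beta> - \<alpha>)" if "\<alpha> \<le> x" "x \<le> \<beta>" "\<beta> - \<alpha> < r" for \<alpha> \<beta>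
    proof -
      have "G (P \<beta>) - G (P \<alpha>) = (\<beta> - \<alpha>) *\<^sub>R v + \<rho> \<beta> - \<rho> \<alpha>"
        unfolding \<rho>_def by (simp add: algebra_simps)
      then have "N (G (P \<beta>) - G (P \<alpha>)) \<le> (\<beta> - \<alpha>) * N v + N (\<rho> \<beta>) + N (\<rho> \<alpha>)"
        using triangle3[of "(\<beta> - \<alpha>) *\<^sub>R v" "\<rho> \<beta>" "- \<rho> \<alpha>"] that by simp
      also have "\<dots> \<le> (\<beta> - \<alpha>) * a + \<delta> * (\<beta> - x) + \<delta> * (x - \<alpha>)"
      proof (intro add_mono mult_left_mono)
        show "N v \<le> a" unfolding v_def P_def by (rule bound[OF x])
        show "N (\<rho> \<beta>) \<le> \<delta> * (\<beta> - x)" using \<rho>[of \<beta>] that by simp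
        show "N (\<rho> \<alpha>) \<le> \<delta> * (x - \<alpha>)" using \<rho>[of \<alpha>] that by simp
      qed (use that in simp)
      finally have "N (G (P \<beta>) - G (P \<alpha>)) - (\<beta> - \<alpha>) * a \<le> \<delta> * (\<beta> - \<alpha>)"
        by (simp add: algebra_simps)
      moreover have "\<psi> \<beta> - \<psi> \<alpha> \<le> N (G (P \<beta>) - G (P \<alpha>)) - (\<beta> - \<alpha>) * a"
        unfolding \<psi>_def using reverse_triangle[of "G (P \<beta>) - G y0" "G (P \<alpha>) - G y0"]
        by (simp add: algebra_simps)
      ultimately show ?thesis by linarith
    qed
    with r(1) show ?thesis by blast
  qed
  have "\<psi> 1 \<le> \<psi> 0"
  proof (rule le_by_local_increments[where \<psi> = \<psi> and g = "\<lambda>_. 0 :: real" and C = 0])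
    fix x \<delta> :: real assume "x \<in> {0..1}" "0 < \<delta>"
    from local[OF this] obtain r where "0 < r"
      and r: "\<forall>\<alpha> \<beta>. \<alpha> \<le> x \<longrightarrow> x \<le> \<beta> \<longrightarrow> \<beta> - \<alpha> < r \<longrightarrow> \<psi> \<beta> - \<psi> \<alpha> \<le> \<delta> * (\<beta> - \<alpha>)"
      by (elim exE conjE) (rule that)
    show "\<exists>r>0. \<forall>\<alpha> \<beta>. 0 \<le> \<alpha> \<longrightarrow> \<alpha> \<le> x \<longrightarrow> x \<le> \<beta> \<longrightarrow> \<beta> \<le> 1 \<longrightarrow> \<beta> - \<alpha> < r \<longrightarrow>
        (x = \<alpha> \<or> x = \<beta>) \<longrightarrow> \<psi> \<beta> - \<psi> \<alpha> \<le> \<delta> * (\<beta> - \<alpha>) + 0 * norm (integral {\<alpha>..\<beta>} (\<lambda>_. 0) - (\<beta> - \<alpha>) *\<^sub>R 0)"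
      using r by (intro exI[of _ r] conjI allI impI \<open>0 < r\<close>) simp
  qed (simp_all add: integrable_0)
  then show ?thesis unfolding \<psi>_def P_def by simp
qed

end

section \<open>Contracting directions\<close>

text \<open>The upper Dini derivative of \<open>\<Phi>\<close> at \<open>p\<close> in direction \<open>q\<close> is at most \<open>- c \<Phi> p\<close>.\<close>

definition contracting_direction :: "('a::real_vector \<Rightarrow> real) \<Rightarrow> real \<Rightarrow> 'a \<Rightarrow> 'a \<Rightarrow> bool" where
  "contracting_direction \<Phi> c p q \<longleftrightarrow>
     (\<forall>\<epsilon>>0. \<exists>\<eta>0>0. \<forall>\<eta>. 0 < \<eta> \<longrightarrow> \<eta> < \<eta>0 \<longrightarrow> \<Phi> (p + \<eta> *\<^sub>R q) \<le> (1 + \<eta> * (\<epsilon> - c)) * \<Phi> p)"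

lemma transpose_add: "transpose (A + B) = transpose A + transpose (B :: real^'n^'m)"
  by (simp add: transpose_def vec_eq_iff)

context cart_norm
begin

lemma contracting_direction_transpose:
  assumes "log_norm N A \<le> - c"
  shows "contracting_direction (dual_norm N) c z (transpose A *v z)"
  unfolding contracting_direction_def
proof (intro allI impI)
  fix \<epsilon> :: real assume "0 < \<epsilon>"
  then obtain h0 where h0: "h0 > 0"
    "\<And>h. 0 < h \<Longrightarrow> h < h0 \<Longrightarrow> induced_norm N (mat 1 + h *\<^sub>R A) \<le> 1 + h * (- c + \<epsilon>)"
    using induced_norm_id_plus_small_le[OF assms] by blast
  have "dual_norm N (z + \<eta> *\<^sub>R (transpose A *v z)) \<le> (1 + \<eta> * (\<epsilon> - c)) * dual_norm N z"
    if "0 < \<eta>" "\<eta> < h0" for \<eta>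
  proof -
    have "z + \<eta> *\<^sub>R (transpose A *v z) = transpose (mat 1 + \<eta> *\<^sub>R A) *v z"
      by (simp only: transpose_add transpose_mat transpose_scalar matrix_vector_mult_add_rdistrib
          matrix_vector_mul_lid scaleR_matrix_vector_assoc)
    then have "dual_norm N (z + \<eta> *\<^sub>R (transpose A *v z)) \<le> induced_norm N (mat 1 + \<eta> *\<^sub>R A) * dual_norm N z"
      by (metis dual_norm_transpose_le)
    also have "\<dots> \<le> (1 + \<eta> * (\<epsilon> - c)) * dual_norm N z"
      using h0(2)[OF that] by (intro mult_right_mono) auto
    finally show ?thesis .
  qed
  with h0(1) show "\<exists>\<eta>0>0. \<forall>\<eta>. 0 < \<eta> \<longrightarrow> \<eta> < \<eta>0 \<longrightarrow>
      dual_norm N (z + \<eta> *\<^sub>R (transpose A *v z)) \<le> (1 + \<eta> * (\<epsilon> - c)) * dual_norm N z"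
    by blast
qed

lemma contracting_direction_increment:
  fixes F :: "real^'n \<Rightarrow> real^'n" and DF :: "real^'n \<Rightarrow> real^'n^'n"
  assumes deriv: "\<And>y. (F has_derivative (\<lambda>h. DF y *v h)) (at y)"
    and cont: "continuous_on UNIV DF"
    and log: "\<And>y. log_norm N (DF y) \<le> - c"
  shows "contracting_direction N c (y1 - y2) (F y1 - F y2)"
  unfolding contracting_direction_def
proof (intro allI impI)
  fix \<epsilon> :: real assume "0 < \<epsilon>"
  define M where "M \<theta> = DF (y2 + \<theta> *\<^sub>R (y1 - y2))" for \<theta>
  have log_M: "log_norm N (M \<theta>) \<le> - c" for \<theta>
    unfolding M_def by (rule log)
  have "continuous_on {0..1} M"
    unfolding M_def
    by (rule continuous_on_compose2[OF cont, where f = "\<lambda>\<theta>. y2 + \<theta> *\<^sub>R (y1 - y2)"])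
      (auto intro!: continuous_intros)
  then obtain \<eta>0 where \<eta>0: "\<eta>0 > 0" "\<And>\<eta> \<theta>. 0 < \<eta> \<Longrightarrow> \<eta> < \<eta>0 \<Longrightarrow> \<theta> \<in> {0..1} \<Longrightarrow>
      induced_norm N (mat 1 + \<eta> *\<^sub>R M \<theta>) \<le> 1 + \<eta> * (- c + \<epsilon>)"
    using uniform_induced_norm_id_plus_small_le[of M "- c", OF _ log_M \<open>0 < \<epsilon>\<close>] by blast
  have "N ((y1 - y2) + \<eta> *\<^sub>R (F y1 - F y2)) \<le> (1 + \<eta> * (\<epsilon> - c)) * N (y1 - y2)"
    if \<eta>: "0 < \<eta>" "\<eta> < \<eta>0" for \<eta>
  proof -
    have "N ((y1 + \<eta> *\<^sub>R F y1) - (y2 + \<eta> *\<^sub>R F y2)) \<le> (1 + \<eta> * (\<epsilon> - c)) * N (y1 - y2)"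
    proof (rule mean_value_inequality[where G = "\<lambda>y. y + \<eta> *\<^sub>R F y"
          and G' = "\<lambda>y h. (mat 1 + \<eta> *\<^sub>R DF y) *v h"])
      show "((\<lambda>y. y + \<eta> *\<^sub>R F y) has_derivative (\<lambda>h. (mat 1 + \<eta> *\<^sub>R DF y) *v h)) (at y)" for y
        using has_derivative_add[OF has_derivative_ident has_derivative_scaleR_right[OF deriv[of y]]]
        by (simp add: matrix_vector_mult_add_rdistrib scaleR_matrix_vector_assoc)
      fix \<theta> :: real assume "\<theta> \<in> {0..1}"
      have "N ((mat 1 + \<eta> *\<^sub>R M \<theta>) *v (y1 - y2)) \<le> induced_norm N (mat 1 + \<eta> *\<^sub>R M \<theta>) * N (y1 - y2)"
        by (rule mult_le_induced_norm)
      also have "\<dots> \<le> (1 + \<eta> * (\<epsilon> - c)) * N (y1 - y2)"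
        using \<eta>0(2)[OF \<eta> \<open>\<theta> \<in> {0..1}\<close>] by (intro mult_right_mono) auto
      finally show "N ((mat 1 + \<eta> *\<^sub>R DF (y2 + \<theta> *\<^sub>R (y1 - y2))) *v (y1 - y2)) \<le> (1 + \<eta> * (\<epsilon> - c)) * N (y1 - y2)"
        unfolding M_def .
    qed
    then show ?thesis by (simp add: algebra_simps)
  qed
  with \<eta>0(1) show "\<exists>\<eta>0>0. \<forall>\<eta>. 0 < \<eta> \<longrightarrow> \<eta> < \<eta>0 \<longrightarrow>
      N ((y1 - y2) + \<eta> *\<^sub>R (F y1 - F y2)) \<le> (1 + \<eta> * (\<epsilon> - c)) * N (y1 - y2)"
    by blast
qed

end

section \<open>A Gronwall-type contraction estimate\<close>

lemma exp_le_inverse_one_minus: "(x::real) < 1 \<Longrightarrow> exp x \<le> 1 / (1 - x)"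
proof -
  assume "x < 1"
  have "1 - x \<le> exp (- x)" using exp_ge_add_one_self[of "- x"] by simp
  then have "1 / exp (- x) \<le> 1 / (1 - x)" using \<open>x < 1\<close> by (intro divide_left_mono) auto
  then show ?thesis by (simp add: exp_minus divide_inverse)
qed

lemma exp_le_one_plus_double: "0 \<le> (x::real) \<Longrightarrow> x \<le> 1 / 2 \<Longrightarrow> exp x \<le> 1 + 2 * x"
proof -
  assume x: "0 \<le> x" "x \<le> 1 / 2"
  have "exp x \<le> 1 / (1 - x)" using x by (intro exp_le_inverse_one_minus) auto
  also have "\<dots> \<le> 1 + 2 * x"
  proof -
    have "0 \<le> x * (1 - 2 * x)" using x by simp
    then have "1 \<le> (1 + 2 * x) * (1 - x)" by (simp add: algebra_simps)
    then show ?thesis using x by (simp add: field_simps)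
  qed
  finally show ?thesis .
qed

lemma has_integral_increment:
  fixes g e :: "real \<Rightarrow> 'a::euclidean_space"
  assumes int: "\<And>s. s \<in> {0..T} \<Longrightarrow> (g has_integral (e s - e 0)) {0..s}"
    and "0 \<le> \<alpha>" "\<alpha> \<le> \<beta>" "\<beta> \<le> T"
  shows "(g has_integral (e \<beta> - e \<alpha>)) {\<alpha>..\<beta>}"
proof -
  have "\<beta> \<in> {0..T}" using assms by auto
  then have g: "g integrable_on {0..\<beta>}" using int has_integral_integrable by blast
  have "integral {0..\<alpha>} g + integral {\<alpha>..\<beta>} g = integral {0..\<beta>} g"
    using assms g by (intro Henstock_Kurzweil_Integration.integral_combine) auto
  moreover have "integral {0..\<alpha>} g = e \<alpha> - e 0" "integral {0..\<beta>} g = e \<beta> - e 0"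
    using int[of \<alpha>] int[of \<beta>] assms by (auto intro: integral_unique)
  moreover have "g integrable_on {\<alpha>..\<beta>}"
    using assms by (intro integrable_subinterval_real[OF g]) auto
  ultimately show ?thesis by (metis add_diff_cancel_left' diff_diff_eq2 has_integral_integral)
qed

lemma has_integral_time_reversal:
  fixes g e :: "real \<Rightarrow> 'a::euclidean_space"
  assumes int: "\<And>s. s \<in> {0..T} \<Longrightarrow> (g has_integral (e s - e 0)) {0..s}"
    and "\<tau> \<in> {0..T}"
  shows "((\<lambda>\<sigma>. - g (T - \<sigma>)) has_integral (e (T - \<tau>) - e T)) {0..\<tau>}"
proof -
  have "(g has_integral (e T - e (T - \<tau>))) {T - \<tau>..T}"
    using has_integral_increment[where \<alpha> = "T - \<tau>" and \<beta> = T, OF int] assms(2) by auto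
  then have "((\<lambda>x. g (- x)) has_integral (e T - e (T - \<tau>))) {- T..- (T - \<tau>)}"
    by (simp only: has_integral_reflect_real)
  from has_integral_shift_real_ivl[OF this, of "- T"]
  have "((\<lambda>\<sigma>. g (T - \<sigma>)) has_integral (e T - e (T - \<tau>))) {0..\<tau>}"
    by (simp add: algebra_simps)
  from has_integral_neg[OF this] show ?thesis by simp
qed

context vector_norm
begin

lemma contracting_direction_backward:
  assumes contr: "contracting_direction N c p q" and "0 < h"
  shows "(1 + h * c) * N p \<le> N (p - h *\<^sub>R q)"
proof (rule field_le_epsilon)
  fix \<delta> :: real assume "0 < \<delta>"
  define \<epsilon> where "\<epsilon> = \<delta> / (h * N p + 1)"
  have hp: "0 \<le> h * N p" using \<open>0 < h\<close> by simp
  have "0 < \<epsilon>" unfolding \<epsilon>_def using \<open>0 < \<delta>\<close> hp by simp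
  have h\<epsilon>: "h * \<epsilon> * N p \<le> \<delta>"
  proof -
    have "h * \<epsilon> * N p = \<delta> * (h * N p / (h * N p + 1))"
      unfolding \<epsilon>_def using hp by (simp add: field_simps)
    also have "\<dots> \<le> \<delta> * 1" using hp \<open>0 < \<delta>\<close> by (intro mult_left_mono) auto
    finally show ?thesis by simp
  qed
  obtain \<eta>0 where \<eta>0: "\<eta>0 > 0" "\<And>\<eta>. 0 < \<eta> \<Longrightarrow> \<eta> < \<eta>0 \<Longrightarrow> N (p + \<eta> *\<^sub>R q) \<le> (1 + \<eta> * (\<epsilon> - c)) * N p"
    using contr \<open>0 < \<epsilon>\<close> unfolding contracting_direction_def by blast
  define \<eta> where "\<eta> = \<eta>0 / 2"
  have \<eta>: "0 < \<eta>" "\<eta> < \<eta>0" unfolding \<eta>_def using \<eta>0 by auto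
  have split: "(1 + \<eta> / h) *\<^sub>R p = (p + \<eta> *\<^sub>R q) + (\<eta> / h) *\<^sub>R (p - h *\<^sub>R q)"
    using \<open>0 < h\<close> by (simp add: algebra_simps)
  have "0 < 1 + \<eta> / h" using \<eta>(1) \<open>0 < h\<close> by (simp add: add_pos_pos)
  then have "(1 + \<eta> / h) * N p = N ((1 + \<eta> / h) *\<^sub>R p)" by simp
  also have "\<dots> \<le> N (p + \<eta> *\<^sub>R q) + (\<eta> / h) * N (p - h *\<^sub>R q)"
    unfolding split using triangle[of "p + \<eta> *\<^sub>R q" "(\<eta> / h) *\<^sub>R (p - h *\<^sub>R q)"] \<eta>(1) \<open>0 < h\<close> by simp
  also have "\<dots> \<le> (1 + \<eta> * (\<epsilon> - c)) * N p + (\<eta> / h) * N (p - h *\<^sub>R q)"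
    using \<eta>0(2)[OF \<eta>] by simp
  finally have "(\<eta> / h) * ((1 + h * c - h * \<epsilon>) * N p) \<le> (\<eta> / h) * N (p - h *\<^sub>R q)"
    using \<open>0 < h\<close> by (simp add: algebra_simps)
  then have "(1 + h * c - h * \<epsilon>) * N p \<le> N (p - h *\<^sub>R q)"
    by (rule mult_left_le_imp_le) (use \<open>0 < h\<close> \<eta> in simp)
  then show "(1 + h * c) * N p \<le> N (p - h *\<^sub>R q) + \<delta>"
    using h\<epsilon> by (simp add: algebra_simps)
qed

text \<open>
  One step of the comparison for the weight \<open>V = e\<^sup>c\<^sup>' \<^sup>t (N e - R / c')\<close>, once with the explicit
  and once with the implicit Euler scheme; \<open>err\<close> is the error of the one-point quadrature.
\<close>

lemma explicit_euler_step:
  assumes "0 < c'" "c' \<le> c1" "0 \<le> h" "0 \<le> R"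
    and contr: "N (p + h *\<^sub>R q) \<le> (1 - h * c1) * N p"
    and rem: "N (g - q) \<le> R"
    and p': "p' = p + h *\<^sub>R g + err"
  shows "exp (c' * h) * (N p' - R / c') - (N p - R / c') \<le> h * R * (exp (c' * h) - 1) + exp (c' * h) * N err"
proof -
  define k where "k = exp (c' * h)"
  have "N p' \<le> N (p + h *\<^sub>R q) + N (h *\<^sub>R (g - q)) + N err"
    using triangle3[of "p + h *\<^sub>R q" "h *\<^sub>R (g - q)" err] p' by (simp add: algebra_simps)
  also have "\<dots> \<le> (1 - h * c1) * N p + h * R + N err"
    using contr rem \<open>0 \<le> h\<close> by (simp add: add_mono mult_left_mono)
  finally have step: "N p' \<le> (1 - h * c1) * N p + h * R + N err" .
  have "c' * h \<le> h * c1" using mult_right_mono[OF assms(2,3)] by (simp add: mult.commute)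
  then have "k * (1 - h * c1) \<le> k * (1 - c' * h)"
    by (intro mult_left_mono) (auto simp: k_def)
  also have "\<dots> \<le> k * exp (- (c' * h))"
    using exp_ge_add_one_self[of "- (c' * h)"] by (intro mult_left_mono) (auto simp: k_def)
  also have "\<dots> = 1" by (simp add: k_def exp_minus_inverse)
  finally have decay: "k * (1 - h * c1) - 1 \<le> 0" by simp
  have "c' * h \<le> k - 1" using exp_ge_add_one_self[of "c' * h"] unfolding k_def by linarith
  then have "h \<le> (k - 1) / c'" using \<open>0 < c'\<close> by (simp add: pos_le_divide_eq mult.commute)
  then have quad: "R * (k * h - (k - 1) / c') \<le> R * (k * h - h)"
    using \<open>0 \<le> R\<close> by (intro mult_left_mono) auto
  have "k * (N p' - R / c') - (N p - R / c') \<le> k * ((1 - h * c1) * N p + h * R + N err) - k * (R / c') - (N p - R / c')"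
    using step by (simp add: k_def right_diff_distrib)
  also have "\<dots> = (k * (1 - h * c1) - 1) * N p + R * (k * h - (k - 1) / c') + k * N err"
    by (simp add: algebra_simps diff_divide_distrib)
  also have "\<dots> \<le> R * (k * h - h) + k * N err"
    using decay quad mult_right_mono[OF decay nonneg[of p]] by linarith
  finally show ?thesis by (simp add: k_def algebra_simps)
qed

lemma implicit_euler_step:
  assumes "0 < c'" "0 \<le> h" "c' * h < 1" "c * c' * h \<le> c - c'" "0 \<le> R"
    and contr: "contracting_direction N c p' q"
    and rem: "N (g - q) \<le> R"
    and p': "p' = p + h *\<^sub>R g + err"
  shows "exp (c' * h) * (N p' - R / c') - (N p - R / c') \<le> N err"
proof (cases "h = 0")
  case True
  then show ?thesis using reverse_triangle[of p' p] p' by simp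
next
  case False
  define k where "k = exp (c' * h)"
  have "(1 + h * c) * N p' \<le> N (p' - h *\<^sub>R q)"
    using contracting_direction_backward[OF contr] False \<open>0 \<le> h\<close> by simp
  also have "p' - h *\<^sub>R q = p + h *\<^sub>R (g - q) + err" using p' by (simp add: algebra_simps)
  also have "N \<dots> \<le> N p + h * N (g - q) + N err"
    using triangle3[of p "h *\<^sub>R (g - q)" err] \<open>0 \<le> h\<close> by simp
  also have "\<dots> \<le> N p + h * R + N err" using rem \<open>0 \<le> h\<close> by (simp add: mult_left_mono)
  finally have step: "(1 + h * c) * N p' \<le> N p + h * R + N err" .
  have "k \<le> 1 / (1 - c' * h)" unfolding k_def by (rule exp_le_inverse_one_minus) fact
  also have "\<dots> \<le> 1 + h * c"
  proof -
    have "h * (c' + c * c' * h) \<le> h * c" using assms by (intro mult_left_mono) auto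
    then have "1 \<le> (1 + h * c) * (1 - c' * h)" by (simp add: algebra_simps)
    then show ?thesis using assms(3) by (simp add: field_simps)
  qed
  finally have "k * N p' \<le> N p + h * R + N err"
    using step mult_right_mono[of k "1 + h * c" "N p'"] by simp
  moreover have "h * R \<le> (k - 1) * R / c'"
  proof -
    have "c' * h \<le> k - 1" using exp_ge_add_one_self[of "c' * h"] unfolding k_def by linarith
    then have "h \<le> (k - 1) / c'" using \<open>0 < c'\<close> by (simp add: pos_le_divide_eq mult.commute)
    from mult_right_mono[OF this \<open>0 \<le> R\<close>] show ?thesis by simp
  qed
  moreover have "k * (N p' - R / c') - (N p - R / c') = k * N p' - N p - (k - 1) * R / c'"
    by (simp add: algebra_simps diff_divide_distrib)
  ultimately show ?thesis unfolding k_def by linarith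
qed

lemma contraction_estimate_slower_rate:
  fixes e g q :: "real \<Rightarrow> 'a"
  assumes "0 < c'" "c' < c" "0 \<le> R" "0 \<le> t"
    and int: "\<And>s. s \<in> {0..t} \<Longrightarrow> (g has_integral (e s - e 0)) {0..s}"
    and rem: "\<And>s. s \<in> {0..t} \<Longrightarrow> N (g s - q s) \<le> R"
    and contr: "\<And>s. s \<in> {0..t} \<Longrightarrow> contracting_direction N c (e s) (q s)"
  shows "exp (c' * t) * (N (e t) - R / c') \<le> N (e 0) - R / c'"
proof -
  define V where "V \<tau> = exp (c' * \<tau>) * (N (e \<tau>) - R / c')" for \<tau>
  define c1 where "c1 = (c + c') / 2"
  have c1: "c' < c1" "c1 < c" using assms(2) by (auto simp: c1_def)
  obtain C where C: "C > 0" "\<And>x. N x \<le> C * norm x" using le_norm by blast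
  have "V t \<le> V 0"
  proof (rule le_by_local_increments[where \<psi> = V and C = "2 * exp (c' * t) * C"])
    show "g integrable_on {0..t}" using int[of t] \<open>0 \<le> t\<close> by auto
    show "0 \<le> 2 * exp (c' * t) * C" using C(1) by simp
    fix x \<delta> :: real assume x: "x \<in> {0..t}" and "0 < \<delta>"
    define \<epsilon> where "\<epsilon> = \<delta> / exp (c' * t)"
    have "0 < \<epsilon>" using \<open>0 < \<delta>\<close> by (simp add: \<epsilon>_def)
    have "0 < c - c1" using c1 by simp
    with contr[OF x] obtain \<eta>0 where \<eta>0: "0 < \<eta>0"
      "\<And>\<eta>. 0 < \<eta> \<Longrightarrow> \<eta> < \<eta>0 \<Longrightarrow> N (e x + \<eta> *\<^sub>R q x) \<le> (1 + \<eta> * ((c - c1) - c)) * N (e x)"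
      unfolding contracting_direction_def by blast
    define r where "r = min \<eta>0 (min (1 / (2 * c')) (min ((c - c') / (c * c')) (\<epsilon> / (2 * c' * R + 1))))"
    have "0 < r" unfolding r_def using \<eta>0(1) assms(1-3) \<open>0 < \<epsilon>\<close> by (simp add: add_nonneg_pos)
    show "\<exists>r>0. \<forall>\<alpha> \<beta>. 0 \<le> \<alpha> \<longrightarrow> \<alpha> \<le> x \<longrightarrow> x \<le> \<beta> \<longrightarrow> \<beta> \<le> t \<longrightarrow> \<beta> - \<alpha> < r \<longrightarrow> (x = \<alpha> \<or> x = \<beta>) \<longrightarrow>
        V \<beta> - V \<alpha> \<le> \<delta> * (\<beta> - \<alpha>) + 2 * exp (c' * t) * C * norm (integral {\<alpha>..\<beta>} g - (\<beta> - \<alpha>) *\<^sub>R g x)"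
    proof (intro exI[of _ r] conjI allI impI \<open>0 < r\<close>)
      fix \<alpha> \<beta> assume ab: "0 \<le> \<alpha>" "\<alpha> \<le> x" "x \<le> \<beta>" "\<beta> \<le> t" "\<beta> - \<alpha> < r" and tag: "x = \<alpha> \<or> x = \<beta>"
      define h where "h = \<beta> - \<alpha>"
      define err where "err = integral {\<alpha>..\<beta>} g - h *\<^sub>R g x"
      define k where "k = exp (c' * h)"
      have "h < r" "0 \<le> h" using ab by (auto simp: h_def)
      then have hr: "h < \<eta>0" "h < 1 / (2 * c')" "h < (c - c') / (c * c')" "h < \<epsilon> / (2 * c' * R + 1)"
        by (auto simp: r_def)
      have "0 < 2 * c' * R + 1" using assms(1,3) by (simp add: add_nonneg_pos)
      then have h: "0 \<le> h" "h < \<eta>0" "c' * h \<le> 1 / 2" "c * c' * h \<le> c - c'" "h * (2 * c' * R + 1) \<le> \<epsilon>"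
        using hr \<open>0 \<le> h\<close> assms(1,2) by (simp_all add: pos_less_divide_eq mult.commute mult.left_commute)
      have e\<beta>: "e \<beta> = e \<alpha> + h *\<^sub>R g x + err"
        using integral_unique[OF has_integral_increment[OF int ab(1) _ ab(4)]] ab
        by (simp add: err_def h_def)
      have step: "k * (N (e \<beta>) - R / c') - (N (e \<alpha>) - R / c') \<le> h * \<epsilon> + 2 * N err"
        using tag
      proof
        assume "x = \<alpha>"
        have k: "k - 1 \<le> 2 * c' * h" "k \<le> 2"
          using exp_le_one_plus_double[of "c' * h"] h(1,3) assms(1) by (auto simp: k_def)
        have "R * (k - 1) \<le> R * (2 * c' * h)" using k(1) \<open>0 \<le> R\<close> by (rule mult_left_mono)
        also have "\<dots> \<le> h * (2 * c' * R + 1)" using h(1) by (simp add: algebra_simps)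
        finally have "R * (k - 1) \<le> \<epsilon>" using h(5) by linarith
        then have "h * R * (k - 1) \<le> h * \<epsilon>"
          using h(1) by (simp add: mult.assoc mult_left_mono)
        moreover have "k * N err \<le> 2 * N err" using k(2) by (simp add: mult_right_mono)
        moreover have "N (e \<alpha> + h *\<^sub>R q x) \<le> (1 - h * c1) * N (e \<alpha>)"
        proof (cases "h = 0")
          case False
          then show ?thesis using \<eta>0(2)[of h] h(1,2) \<open>x = \<alpha>\<close> by simp
        qed simp
        then have "k * (N (e \<beta>) - R / c') - (N (e \<alpha>) - R / c') \<le> h * R * (k - 1) + k * N err"
          unfolding k_def using c1(1) h(1) assms(1,3) rem[OF x] e\<beta>
          by (intro explicit_euler_step) auto
        ultimately show ?thesis by linarith
      next
        assume "x = \<beta>"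
        have "contracting_direction N c (e \<beta>) (q x)" using contr[OF x] \<open>x = \<beta>\<close> by simp
        then have "k * (N (e \<beta>) - R / c') - (N (e \<alpha>) - R / c') \<le> N err"
          unfolding k_def using assms(1,3) h(1,3,4) rem[OF x] e\<beta>
          by (intro implicit_euler_step) auto
        moreover have "0 \<le> h * \<epsilon>" using h(1) \<open>0 < \<epsilon>\<close> by simp
        ultimately show ?thesis using nonneg[of err] by linarith
      qed
      have "exp (c' * \<beta>) = exp (c' * \<alpha>) * k"
        unfolding k_def h_def by (simp add: right_diff_distrib flip: exp_add)
      then have "V \<beta> - V \<alpha> = exp (c' * \<alpha>) * (k * (N (e \<beta>) - R / c') - (N (e \<alpha>) - R / c'))"
        unfolding V_def by (simp add: algebra_simps)
      also have "\<dots> \<le> exp (c' * \<alpha>) * (h * \<epsilon> + 2 * N err)"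
        using step by (intro mult_left_mono) auto
      also have "\<dots> \<le> exp (c' * t) * (h * \<epsilon> + 2 * N err)"
        using ab assms(1) h(1) \<open>0 < \<epsilon>\<close> by (intro mult_right_mono) auto
      also have "\<dots> = \<delta> * h + 2 * exp (c' * t) * N err"
        by (simp add: \<epsilon>_def algebra_simps)
      also have "\<dots> \<le> \<delta> * h + 2 * exp (c' * t) * (C * norm err)"
        using C(2)[of err] by simp
      finally show "V \<beta> - V \<alpha> \<le> \<delta> * (\<beta> - \<alpha>) + 2 * exp (c' * t) * C * norm (integral {\<alpha>..\<beta>} g - (\<beta> - \<alpha>) *\<^sub>R g x)"
        by (simp add: h_def err_def mult.assoc)
    qed
  qed (use \<open>0 \<le> t\<close> in auto)
  then show ?thesis by (simp add: V_def)
qed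

lemma contraction_estimate:
  fixes e g q :: "real \<Rightarrow> 'a"
  assumes "0 < c" "0 \<le> R" "0 \<le> t"
    and int: "\<And>s. s \<in> {0..t} \<Longrightarrow> (g has_integral (e s - e 0)) {0..s}"
    and rem: "\<And>s. s \<in> {0..t} \<Longrightarrow> N (g s - q s) \<le> R"
    and contr: "\<And>s. s \<in> {0..t} \<Longrightarrow> contracting_direction N c (e s) (q s)"
  shows "N (e t) \<le> exp (- c * t) * N (e 0) + R * (1 - exp (- c * t)) / c"
proof -
  define F where "F c' = exp (- c' * t) * N (e 0) + R * (1 - exp (- c' * t)) / c'" for c'
  have "N (e t) \<le> F c'" if "c' \<in> {c / 2<..<c}" for c'
  proof -
    have c': "0 < c'" "c' < c" using that assms(1) by auto
    have "exp (c' * t) * (N (e t) - R / c') \<le> N (e 0) - R / c'"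
      by (rule contraction_estimate_slower_rate[OF c' assms(2,3) int rem contr])
    then have "exp (- c' * t) * (exp (c' * t) * (N (e t) - R / c')) \<le> exp (- c' * t) * (N (e 0) - R / c')"
      by (intro mult_left_mono) auto
    then have "N (e t) - R / c' \<le> exp (- c' * t) * (N (e 0) - R / c')"
      by (simp add: mult.assoc[symmetric] flip: exp_add)
    then show ?thesis unfolding F_def by (simp add: algebra_simps diff_divide_distrib)
  qed
  moreover have "eventually (\<lambda>c'. c' \<in> {c / 2<..<c}) (at_left c)"
    by (rule eventually_at_left_real) (use assms(1) in simp)
  ultimately have "eventually (\<lambda>c'. N (e t) \<le> F c') (at_left c)"
    by (auto elim!: eventually_mono)
  moreover have "(F \<longlongrightarrow> F c) (at_left c)"
    unfolding F_def using assms(1) by (intro tendsto_intros) auto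
  ultimately have "N (e t) \<le> F c"
    by (intro tendsto_le[OF _ _ tendsto_const]) auto
  then show ?thesis unfolding F_def .
qed

end


section \<open>Difference estimates for the state and the adjoint\<close>

lemma state_sol_initial:
  assumes "state_sol T f x0 u x" and "0 \<le> T"
  shows "x 0 = x0"
proof -
  have "0 \<in> {0..T}" using assms(2) by simp
  with assms(1) have "((\<lambda>s. f s (x s) (u s)) has_integral (x 0 - x0)) {0..0}"
    unfolding state_sol_def by blast
  then have "x 0 - x0 = 0"
    by (metis atLeastAtMost_singleton has_integral_refl(2) has_integral_unique)
  then show ?thesis by simp
qed

lemma one_minus_exp_div_mono:
  fixes c t T :: real
  assumes "0 < c" and "t \<le> T"
  shows "(1 - exp (- c * t)) / c \<le> (1 - exp (- c * T)) / c"
  using assms by (simp add: divide_right_mono)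

context cart_norm
begin

lemma state_difference_bound:
  assumes "0 < c" and t: "t \<in> {0..T}"
    and deriv: "\<And>s y. s \<in> {0..T} \<Longrightarrow> ((\<lambda>z. f s z (u s)) has_derivative (\<lambda>h. Dx s y (u s) *v h)) (at y)"
    and cont: "\<And>s. s \<in> {0..T} \<Longrightarrow> continuous_on UNIV (\<lambda>y. Dx s y (u s))"
    and log: "\<And>s y. s \<in> {0..T} \<Longrightarrow> log_norm N (Dx s y (u s)) \<le> - c"
    and x: "state_sol T f x0 u x" and xb: "state_sol T f x0 ub xb"
    and rem: "\<And>s. s \<in> {0..T} \<Longrightarrow> N (f s (xb s) (u s) - f s (xb s) (ub s)) \<le> R"
  shows "N (x t - xb t) \<le> R * ((1 - exp (- c * T)) / c)"
proof -
  have "0 \<le> T" using t by simp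
  then have "0 \<le> R" using rem[of 0] nonneg by (meson atLeastAtMost_iff order.refl order_trans)
  have "x 0 = x0" by (rule state_sol_initial[OF x \<open>0 \<le> T\<close>])
  have "xb 0 = x0" by (rule state_sol_initial[OF xb \<open>0 \<le> T\<close>])
  have "N (x t - xb t) \<le> exp (- c * t) * N (x 0 - xb 0) + R * (1 - exp (- c * t)) / c"
  proof (rule contraction_estimate[where e = "\<lambda>s. x s - xb s"
        and g = "\<lambda>s. f s (x s) (u s) - f s (xb s) (ub s)" and q = "\<lambda>s. f s (x s) (u s) - f s (xb s) (u s)"])
    fix s assume "s \<in> {0..t}"
    then have s: "s \<in> {0..T}" using t by auto
    have "((\<lambda>s. f s (x s) (u s)) has_integral (x s - x0)) {0..s}"
      and "((\<lambda>s. f s (xb s) (ub s)) has_integral (xb s - x0)) {0..s}"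
      using x xb s unfolding state_sol_def by blast+
    from has_integral_diff[OF this]
    have "((\<lambda>s. f s (x s) (u s) - f s (xb s) (ub s)) has_integral ((x s - x0) - (xb s - x0))) {0..s}" .
    then show "((\<lambda>s. f s (x s) (u s) - f s (xb s) (ub s)) has_integral (x s - xb s - (x 0 - xb 0))) {0..s}"
      using \<open>x 0 = x0\<close> \<open>xb 0 = x0\<close> by simp
    show "N (f s (x s) (u s) - f s (xb s) (ub s) - (f s (x s) (u s) - f s (xb s) (u s))) \<le> R"
      using rem[OF s] by simp
    show "contracting_direction N c (x s - xb s) (f s (x s) (u s) - f s (xb s) (u s))"
      using deriv[OF s] cont[OF s] log[OF s] by (rule contracting_direction_increment)
  qed (use \<open>0 < c\<close> \<open>0 \<le> R\<close> t in auto)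
  also have "\<dots> \<le> R * ((1 - exp (- c * T)) / c)"
    using mult_left_mono[OF one_minus_exp_div_mono[OF \<open>0 < c\<close>, of t T] \<open>0 \<le> R\<close>] t
      \<open>x 0 = x0\<close> \<open>xb 0 = x0\<close>
    by simp
  finally show ?thesis .
qed

lemma adjoint_difference_bound:
  assumes "0 < c" and t: "t \<in> {0..T}"
    and lam: "adjoint_sol T Dx x u v lam" and lamb: "adjoint_sol T Dx xb ub vb lamb"
    and log: "\<And>s. s \<in> {0..T} \<Longrightarrow> log_norm N (Dx s (x s) (u s)) \<le> - c"
    and rem: "\<And>s. s \<in> {0..T} \<Longrightarrow> dual_norm N (transpose (Dx s (x s) (u s)) *v lamb s
        - transpose (Dx s (xb s) (ub s)) *v lamb s + (v s - vb s)) \<le> R"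
  shows "dual_norm N (lam t - lamb t) \<le> dual_norm N (lam T - lamb T) + R * ((1 - exp (- c * T)) / c)"
proof -
  have "0 \<le> T" using t by simp
  then have "0 \<le> R" using rem[of 0] dual.nonneg by (meson atLeastAtMost_iff order.refl order_trans)
  define A where "A s = transpose (Dx s (x s) (u s))" for s
  define g where "g s = (- (A s *v lam s) - v s) - (- (transpose (Dx s (xb s) (ub s)) *v lamb s) - vb s)" for s
  define e where "e s = lam s - lamb s" for s
  have int: "(g has_integral (e s - e 0)) {0..s}" if "s \<in> {0..T}" for s
  proof -
    have "((\<lambda>s. - (A s *v lam s) - v s) has_integral (lam s - lam 0)) {0..s}"
      and "((\<lambda>s. - (transpose (Dx s (xb s) (ub s)) *v lamb s) - vb s) has_integral (lamb s - lamb 0)) {0..s}"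
      using lam lamb that unfolding adjoint_sol_def A_def by blast+
    from has_integral_diff[OF this]
    have "(g has_integral ((lam s - lam 0) - (lamb s - lamb 0))) {0..s}" unfolding g_def .
    then show ?thesis by (simp add: e_def algebra_simps)
  qed
  define \<tau> where "\<tau> = T - t"
  have \<tau>: "0 \<le> \<tau>" "\<tau> \<le> T" using t by (auto simp: \<tau>_def)
  text \<open>Backward in time the adjoint difference is driven by \<open>A\<^sup>T\<close>, which contracts in the dual norm.\<close>
  have "dual_norm N (e (T - \<tau>)) \<le> exp (- c * \<tau>) * dual_norm N (e (T - 0)) + R * (1 - exp (- c * \<tau>)) / c"
  proof (rule dual.contraction_estimate[where e = "\<lambda>\<sigma>. e (T - \<sigma>)" and g = "\<lambda>\<sigma>. - g (T - \<sigma>)"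
        and q = "\<lambda>\<sigma>. A (T - \<sigma>) *v e (T - \<sigma>)"])
    fix \<sigma> assume "\<sigma> \<in> {0..\<tau>}"
    then have \<sigma>: "\<sigma> \<in> {0..T}" "T - \<sigma> \<in> {0..T}" using \<tau> by auto
    show "((\<lambda>\<sigma>. - g (T - \<sigma>)) has_integral (e (T - \<sigma>) - e (T - 0))) {0..\<sigma>}"
      using has_integral_time_reversal[OF int \<sigma>(1)] by simp
    show "dual_norm N (- g (T - \<sigma>) - A (T - \<sigma>) *v e (T - \<sigma>)) \<le> R"
      using rem[OF \<sigma>(2)] by (simp add: g_def A_def e_def matrix_vector_mult_diff_distrib algebra_simps)
    show "contracting_direction (dual_norm N) c (e (T - \<sigma>)) (A (T - \<sigma>) *v e (T - \<sigma>))"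
      unfolding A_def by (rule contracting_direction_transpose) (rule log[OF \<sigma>(2)])
  qed (use \<open>0 < c\<close> \<open>0 \<le> R\<close> \<tau> in auto)
  also have "\<dots> \<le> dual_norm N (e T) + R * ((1 - exp (- c * T)) / c)"
  proof (rule add_mono)
    show "exp (- c * \<tau>) * dual_norm N (e (T - 0)) \<le> dual_norm N (e T)"
      using \<tau>(1) \<open>0 < c\<close> by (simp add: mult_left_le_one_le)
    show "R * (1 - exp (- c * \<tau>)) / c \<le> R * ((1 - exp (- c * T)) / c)"
      using mult_left_mono[OF one_minus_exp_div_mono[OF \<open>0 < c\<close> \<tau>(2)] \<open>0 \<le> R\<close>] by simp
  qed
  finally show ?thesis by (simp add: e_def \<tau>_def)
qed

end

lemma log_norm_le_of_osl_const: "osl_const N DF \<le> ereal m \<Longrightarrow> log_norm N (DF y) \<le> m"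
  unfolding osl_const_def by (simp add: SUP_le_iff)

lemma continuous_on_slice:
  assumes "continuous_on (A \<times> UNIV \<times> B) (\<lambda>(t, y, w). F t y w)" and "t \<in> A" and "w \<in> B"
  shows "continuous_on UNIV (\<lambda>y. F t y w)"
proof -
  have "continuous_on UNIV ((\<lambda>(t, y, w). F t y w) \<circ> (\<lambda>y. (t, y, w)))"
    using assms by (intro continuous_on_compose continuous_on_subset[OF assms(1)] continuous_intros) auto
  then show ?thesis by (simp add: o_def)
qed

text \<open>
  Lipschitz bounds \<open>\<phi> s \<le> L d s\<close> pass to the supremum of \<open>d\<close> even when \<open>L\<close> is negative,
  since then \<open>d\<close> vanishes identically.
\<close>

lemma le_mult_cSUP:
  fixes d \<phi> :: "'a \<Rightarrow> real"
  assumes "bdd_above (d ` A)" and "\<And>s. s \<in> A \<Longrightarrow> 0 \<le> d s" and "\<And>s. s \<in> A \<Longrightarrow> 0 \<le> \<phi> s"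
    and "\<And>s. s \<in> A \<Longrightarrow> \<phi> s \<le> L * d s" and "s \<in> A"
  shows "\<phi> s \<le> L * (SUP s\<in>A. d s)"
proof (cases "0 \<le> L")
  case True
  then have "L * d s \<le> L * (SUP s\<in>A. d s)"
    using cSUP_upper[OF assms(5,1)] by (rule mult_left_mono[rotated])
  then show ?thesis using assms(4)[OF assms(5)] by linarith
next
  case False
  have zero: "d s' = 0" if "s' \<in> A" for s'
  proof -
    have "0 \<le> L * d s'" using assms(3,4)[OF that] by linarith
    with False assms(2)[OF that] show ?thesis by (auto simp: zero_le_mult_iff)
  qed
  have "(SUP s\<in>A. d s) = (SUP s\<in>A. 0)" by (intro SUP_cong) (auto simp: zero)
  also have "\<dots> = 0" using assms(5) by (intro cSUP_const) auto
  finally show ?thesis using assms(4)[OF assms(5)] zero[OF assms(5)] by simp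
qed


theorem corollary1:
  fixes T c lfu lfxx lfxu :: real
    and U :: "(real^'k) set" and V X \<Lambda> :: "(real^'n) set"
    and f :: "real \<Rightarrow> real^'n \<Rightarrow> real^'k \<Rightarrow> real^'n"
    and Dx :: "real \<Rightarrow> real^'n \<Rightarrow> real^'k \<Rightarrow> real^'n^'n"
    and Du :: "real \<Rightarrow> real^'n \<Rightarrow> real^'k \<Rightarrow> real^'k^'n"
    and x0 :: "real^'n"
    and N :: "real^'n \<Rightarrow> real" and NU :: "real^'k \<Rightarrow> real"
    and u ub :: "real \<Rightarrow> real^'k"
    and v vb x xb lam lamb :: "real \<Rightarrow> real^'n"
  assumes T: "T > 0"
    and U: "bounded U" "0 \<in> U"
    and V: "bounded V"
    and f_cont: "continuous_on ({0..T} \<times> UNIV \<times> U) (\<lambda>(t, y, w). f t y w)"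
    and Dx_deriv: "\<And>t y w. t \<in> {0..T} \<Longrightarrow> w \<in> U \<Longrightarrow>
        ((\<lambda>z. f t z w) has_derivative (\<lambda>h. Dx t y w *v h)) (at y)"
    and Dx_cont: "continuous_on ({0..T} \<times> UNIV \<times> U) (\<lambda>(t, y, w). Dx t y w)"
    and Du_deriv: "\<And>t y w. t \<in> {0..T} \<Longrightarrow> w \<in> U \<Longrightarrow>
        ((\<lambda>z. f t y z) has_derivative (\<lambda>h. Du t y w *v h)) (at w within U)"
    and Du_cont: "continuous_on ({0..T} \<times> UNIV \<times> U) (\<lambda>(t, y, w). Du t y w)"
    and N: "is_norm N" and NU: "is_norm NU"
    and c: "c > 0"
    and A1_osl: "\<And>t w. t \<in> {0..T} \<Longrightarrow> w \<in> U \<Longrightarrow>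
        osl_const N (\<lambda>y. Dx t y w) \<le> ereal (- c)"
    and A1_bdd: "\<And>z. state_sol T f x0 (\<lambda>_. 0) z \<Longrightarrow> bounded (z ` {0..T})"
    and A2: "\<And>t y w1 w2. t \<in> {0..T} \<Longrightarrow> w1 \<in> U \<Longrightarrow> w2 \<in> U \<Longrightarrow>
        N (f t y w1 - f t y w2) \<le> lfu * NU (w1 - w2)"
    and X: "bounded X" and Lam: "bounded \<Lambda>"
    and A3x: "\<And>t w l y1 y2. t \<in> {0..T} \<Longrightarrow> w \<in> U \<Longrightarrow> l \<in> \<Lambda> \<Longrightarrow>
        dual_norm N (transpose (Dx t y1 w) *v l - transpose (Dx t y2 w) *v l) \<le> lfxx * N (y1 - y2)"
    and A3u: "\<And>t y l w1 w2. t \<in> {0..T} \<Longrightarrow> y \<in> X \<Longrightarrow> l \<in> \<Lambda> \<Longrightarrow> w1 \<in> U \<Longrightarrow> w2 \<in> U \<Longrightarrow>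
        dual_norm N (transpose (Dx t y w1) *v l - transpose (Dx t y w2) *v l) \<le> lfxu * NU (w1 - w2)"
    and u_meas: "u measurable_on {0..T}" and ub_meas: "ub measurable_on {0..T}"
    and v_meas: "v measurable_on {0..T}" and vb_meas: "vb measurable_on {0..T}"
    and u_in: "\<And>t. t \<in> {0..T} \<Longrightarrow> u t \<in> U" and ub_in: "\<And>t. t \<in> {0..T} \<Longrightarrow> ub t \<in> U"
    and v_in: "\<And>t. t \<in> {0..T} \<Longrightarrow> v t \<in> V" and vb_in: "\<And>t. t \<in> {0..T} \<Longrightarrow> vb t \<in> V"
    and x_sol: "state_sol T f x0 u x" and xb_sol: "state_sol T f x0 ub xb"
    and lam_sol: "adjoint_sol T Dx x u v lam" and lamb_sol: "adjoint_sol T Dx xb ub vb lamb"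
    and x_in: "\<And>t. t \<in> {0..T} \<Longrightarrow> x t \<in> X \<and> xb t \<in> X"
    and lam_in: "\<And>t. t \<in> {0..T} \<Longrightarrow> lam t \<in> \<Lambda> \<and> lamb t \<in> \<Lambda>"
  shows "(let \<kappa> = (1 - exp (- c * T)) / c in
     (SUP t\<in>{0..T}. dual_norm N (lam t - lamb t))
       \<le> dual_norm N (lam T - lamb T)
         + \<kappa> * (SUP t\<in>{0..T}. dual_norm N (v t - vb t))
         + (lfxu * \<kappa> + lfxx * lfu * \<kappa>\<^sup>2) * (SUP t\<in>{0..T}. NU (u t - ub t)))"
proof -
  interpret N: cart_norm N by unfold_locales (rule N)
  interpret NU: vector_norm NU by unfold_locales (rule NU)
  define \<kappa> where "\<kappa> = (1 - exp (- c * T)) / c"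
  define Su where "Su = (SUP t\<in>{0..T}. NU (u t - ub t))"
  define Sv where "Sv = (SUP t\<in>{0..T}. dual_norm N (v t - vb t))"
  have bddU: "bdd_above ((\<lambda>t. NU (u t - ub t)) ` {0..T})"
    by (rule NU.bdd_above_diff_image[OF U(1)]) (use u_in ub_in in auto)
  have Sv: "dual_norm N (v t - vb t) \<le> Sv" if "t \<in> {0..T}" for t
  proof -
    have "bdd_above ((\<lambda>t. dual_norm N (v t - vb t)) ` {0..T})"
      by (rule N.dual.bdd_above_diff_image[OF V]) (use v_in vb_in in auto)
    then show ?thesis unfolding Sv_def using that by (rule cSUP_upper[rotated])
  qed
  have log: "log_norm N (Dx t y w) \<le> - c" if "t \<in> {0..T}" "w \<in> U" for t y w
    using A1_osl[OF that] by (rule log_norm_le_of_osl_const)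
  have f_u: "N (f t (xb t) (u t) - f t (xb t) (ub t)) \<le> lfu * Su" if "t \<in> {0..T}" for t
    unfolding Su_def using A2 u_in ub_in that by (intro le_mult_cSUP[OF bddU]) auto
  have x_diff: "N (x t - xb t) \<le> lfu * Su * \<kappa>" if "t \<in> {0..T}" for t
    unfolding \<kappa>_def
    by (rule N.state_difference_bound[where Dx = Dx, OF c that _ _ _ x_sol xb_sol f_u])
      (simp_all add: Dx_deriv continuous_on_slice[OF Dx_cont] log u_in)
  have f_xu: "dual_norm N (transpose (Dx t (xb t) (u t)) *v lamb t - transpose (Dx t (xb t) (ub t)) *v lamb t)
      \<le> lfxu * Su" if "t \<in> {0..T}" for t
    unfolding Su_def using A3u x_in lam_in u_in ub_in that by (intro le_mult_cSUP[OF bddU]) auto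
  have "0 \<le> lfxx"
  proof (rule N.coefficient_nonneg)
    fix y :: "real^'n"
    have "0 \<in> {0..T}" using T by simp
    from order_trans[OF N.dual.nonneg A3x[OF this u_in[OF this] conjunct1[OF lam_in[OF this]], of y 0]]
    show "0 \<le> lfxx * N y" by simp
  qed
  define R where "R = lfxx * (lfu * Su * \<kappa>) + lfxu * Su + Sv"
  have rem: "dual_norm N (transpose (Dx t (x t) (u t)) *v lamb t - transpose (Dx t (xb t) (ub t)) *v lamb t
      + (v t - vb t)) \<le> R" if t: "t \<in> {0..T}" for t
  proof -
    have "lfxx * N (x t - xb t) \<le> lfxx * (lfu * Su * \<kappa>)"
      using x_diff[OF t] \<open>0 \<le> lfxx\<close> by (rule mult_left_mono)
    then show ?thesis
      unfolding R_def
      using N.dual.triangle_telescope[where x = "transpose (Dx t (x t) (u t)) *v lamb t"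
          and y = "transpose (Dx t (xb t) (u t)) *v lamb t" and z = "transpose (Dx t (xb t) (ub t)) *v lamb t"
          and w = "v t - vb t"]
        A3x[OF t u_in[OF t] conjunct2[OF lam_in[OF t]], of "x t" "xb t"] f_xu[OF t] Sv[OF t]
      by linarith
  qed
  have "dual_norm N (lam t - lamb t) \<le> dual_norm N (lam T - lamb T) + R * \<kappa>" if "t \<in> {0..T}" for t
    unfolding \<kappa>_def by (rule N.adjoint_difference_bound[OF c that lam_sol lamb_sol _ rem]) (use log u_in in auto)
  then have "(SUP t\<in>{0..T}. dual_norm N (lam t - lamb t)) \<le> dual_norm N (lam T - lamb T) + R * \<kappa>"
    using T by (intro cSUP_least) auto
  then show ?thesis
    unfolding Let_def \<kappa>_def[symmetric] Su_def[symmetric] Sv_def[symmetric] R_def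
    by (simp add: algebra_simps power2_eq_square)
qed

end
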